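(* In the setting of the context, suppose $0<p_{A|X}(x)<1$ and $0<\hat p_{A|X}(x)<1$ for all $x\in\mathcal X$, where $\hat p_{A|X}$ is a fixed function (deterministic, or independent of the data). Let $\tilde C^{\mathrm{pro}}$ be the procedure $\hat C^{\mathrm{pro}}$ of the context, but with the bins $D_k$ (and hence $B_{1:n}$) constructed from $\hat p_{A|X}$ instead of $p_{A|X}$, i.e. $D_k=\{x:\hat p_{A|X}(x)\in[z_k,z_{k+1})\}$. Define $f_{p,\hat p}(x)=\dfrac{p_{A|X}(x)/(1-p_{A|X}(x))}{\hat p_{A|X}(x)/(1-\hat p_{A|X}(x))}$ and $\delta_{\hat p}=e^{2\sup_{x\in\mathcal X}|\log f_{p,\hat p}(x)|}-1$. Then $$\mathbb E\Big[\frac{1}{N^{(0)}}\sum_{i\in I_{A=0}}\mathbf 1\{Y_i\in\tilde C^{\mathrm{pro}}(X_i)\}\ \Big|\ B_{1:n},A_{1:n}\Big]\ge1-\alpha-(\varepsilon+\delta_{\hat p}+\varepsilon\,\delta_{\hat p}).$$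
   Context: Missing-at-random setting: $(X_i,Y_i,A_i)_{1\le i\le n}$ i.i.d. with $X\sim P_X$, $Y\mid X\sim P_{Y|X}$, $A\mid X\sim\mathrm{Bernoulli}(p_{A|X}(X))$, $A\perp Y\mid X$; observed data $(X_i,A_i,Y_iA_i)$; $p_{A|X}(x)=\mathbb P(A=1|X=x)$. $I_{A=0}=\{i:A_i=0\}$, $N^{(0)}=|I_{A=0}|$. $s$ is a fixed measurable score, $S_i=s(X_i,Y_i)$. For $\varepsilon>0$, $z_k=(1+\varepsilon)^k/(1+(1+\varepsilon)^k)$, $k\in\mathbb Z$; $B_i$ = the $k$ with $X_i\in D_k$. With $B'_1,\dots,B'_M$ the distinct values of the $B_i$, $I_k^{\mathcal B}=\{i:B_i=B'_k\}$, $I_k^{\mathcal B,0},I_k^{\mathcal B,1}$ its subsets with $A_i=0$, $A_i=1$, $N_k^{\mathcal B}=|I_k^{\mathcal B}|$, $N_k^{\mathcal B,0}=|I_k^{\mathcal B,0}|$. $\hat C^{\mathrm{pro}}(x)=\{y:s(x,y)\le Q_{1-\alpha}(\sum_k\sum_{i\in I_k^{\mathcal B,1}}\frac{N_k^{\mathcal B,0}}{N^{(0)}N_k^{\mathcal B}}\delta_{S_i}+\frac1{N^{(0)}}\sum_k\frac{(N_k^{\mathcal B,0})^2}{N_k^{\mathcal B}}\delta_{+\infty})\}$ ($=\mathcal Y$ if $N^{(0)}=0$), $Q_{1-\alpha}(P)=\inf\{t:\mathbb P_{T\sim P}(T\le t)\ge1-\alpha\}$. Coverage proportion is $1$ when $N^{(0)}=0$.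 *)

theory Defs
  imports "HOL-Probability.Probability"
begin

text \<open>One observation is ((X,Y),A). (X,Y) has joint law Q; given (X,Y), A is
Bernoulli(p(X)). This encodes A independent of Y given X and P(A=1|X)=p(X).\<close>

definition mar_obs :: "('x \<times> 'y) measure \<Rightarrow> ('x \<Rightarrow> real) \<Rightarrow> (('x \<times> 'y) \<times> bool) measure" where
  "mar_obs Q p = density (Q \<Otimes>\<^sub>M count_space UNIV)
      (\<lambda>((x,y),a). ennreal (if a then p x else 1 - p x))"

definition mar_data :: "nat \<Rightarrow> ('x \<times> 'y) measure \<Rightarrow> ('x \<Rightarrow> real) \<Rightarrow> (nat \<Rightarrow> ('x \<times> 'y) \<times> bool) measure" where
  "mar_data n Q p = PiM {..<n} (\<lambda>_. mar_obs Q p)"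

definition obsX :: "(nat \<Rightarrow> ('x \<times> 'y) \<times> bool) \<Rightarrow> nat \<Rightarrow> 'x" where
  "obsX \<omega> i = fst (fst (\<omega> i))"
definition obsY :: "(nat \<Rightarrow> ('x \<times> 'y) \<times> bool) \<Rightarrow> nat \<Rightarrow> 'y" where
  "obsY \<omega> i = snd (fst (\<omega> i))"
definition obsA :: "(nat \<Rightarrow> ('x \<times> 'y) \<times> bool) \<Rightarrow> nat \<Rightarrow> bool" where
  "obsA \<omega> i = snd (\<omega> i)"

definition zk :: "real \<Rightarrow> int \<Rightarrow> real" where
  "zk \<epsilon> k = (1 + \<epsilon>) powi k / (1 + (1 + \<epsilon>) powi k)"

definition bin :: "real \<Rightarrow> ('x \<Rightarrow> real) \<Rightarrow> 'x \<Rightarrow> int" where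
  "bin \<epsilon> ph x = (THE k. zk \<epsilon> k \<le> ph x \<and> ph x < zk \<epsilon> (k + 1))"

definition N0 :: "nat \<Rightarrow> (nat \<Rightarrow> bool) \<Rightarrow> nat" where
  "N0 n a = card {i \<in> {..<n}. \<not> a i}"

definition Nk :: "nat \<Rightarrow> (nat \<Rightarrow> int) \<Rightarrow> int \<Rightarrow> nat" where
  "Nk n b k = card {j \<in> {..<n}. b j = k}"

definition Nk0 :: "nat \<Rightarrow> (nat \<Rightarrow> int) \<Rightarrow> (nat \<Rightarrow> bool) \<Rightarrow> int \<Rightarrow> nat" where
  "Nk0 n b a k = card {j \<in> {..<n}. b j = k \<and> \<not> a j}"

text \<open>Quantile Q_beta of the finite discrete measure sum_{i in I} w_i delta_{v_i}
  (values in the extended reals, so that +infinity atoms are allowed):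
  inf { t. P(T <= t) >= beta }.\<close>
definition wquantile :: "real \<Rightarrow> ('i \<Rightarrow> real) \<Rightarrow> ('i \<Rightarrow> ereal) \<Rightarrow> 'i set \<Rightarrow> ereal" where
  "wquantile \<beta> w v I = Inf {t :: ereal. \<beta> \<le> (\<Sum>i\<in>{i \<in> I. v i \<le> t}. w i)}"

text \<open>Atoms 0..n-1 are the scores S_i (with weight N_k^{B,0}/(N^0 N_k^B) if A_i=1,
  weight 0 if A_i = 0); atom n is +infinity with weight
  (1/N^0) sum_k (N_k^{B,0})^2 / N_k^B.\<close>
definition pro_weight :: "nat \<Rightarrow> (nat \<Rightarrow> int) \<Rightarrow> (nat \<Rightarrow> bool) \<Rightarrow> nat \<Rightarrow> real" where
  "pro_weight n b a i =
     (if i < n then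
        (if a i then real (Nk0 n b a (b i)) / (real (N0 n a) * real (Nk n b (b i))) else 0)
      else (\<Sum>k\<in>b ` {..<n}. real (Nk0 n b a k) ^ 2 / real (Nk n b k)) / real (N0 n a))"

definition pro_value :: "nat \<Rightarrow> (nat \<Rightarrow> real) \<Rightarrow> nat \<Rightarrow> ereal" where
  "pro_value n S i = (if i < n then ereal (S i) else \<infinity>)"

definition pro_threshold :: "real \<Rightarrow> nat \<Rightarrow> (nat \<Rightarrow> int) \<Rightarrow> (nat \<Rightarrow> bool) \<Rightarrow> (nat \<Rightarrow> real) \<Rightarrow> ereal" where
  "pro_threshold \<alpha> n b a S = wquantile (1 - \<alpha>) (pro_weight n b a) (pro_value n S) {..n}"

definition pro_set :: "real \<Rightarrow> real \<Rightarrow> ('x \<Rightarrow> real) \<Rightarrow> ('x \<Rightarrow> 'y \<Rightarrow> real) \<Rightarrow> nat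
    \<Rightarrow> (nat \<Rightarrow> ('x \<times> 'y) \<times> bool) \<Rightarrow> 'x \<Rightarrow> 'y set" where
  "pro_set \<alpha> \<epsilon> ph s n \<omega> x =
     (let b = (\<lambda>i. bin \<epsilon> ph (obsX \<omega> i)); a = obsA \<omega>; S = (\<lambda>i. s (obsX \<omega> i) (obsY \<omega> i))
      in if N0 n a = 0 then UNIV else {y. ereal (s x y) \<le> pro_threshold \<alpha> n b a S})"

definition pro_coverage :: "real \<Rightarrow> real \<Rightarrow> ('x \<Rightarrow> real) \<Rightarrow> ('x \<Rightarrow> 'y \<Rightarrow> real) \<Rightarrow> nat
    \<Rightarrow> (nat \<Rightarrow> ('x \<times> 'y) \<times> bool) \<Rightarrow> real" where
  "pro_coverage \<alpha> \<epsilon> ph s n \<omega> =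
     (if N0 n (obsA \<omega>) = 0 then 1
      else (\<Sum>i\<in>{i \<in> {..<n}. \<not> obsA \<omega> i}.
              (if obsY \<omega> i \<in> pro_set \<alpha> \<epsilon> ph s n \<omega> (obsX \<omega> i) then 1 else 0))
           / real (N0 n (obsA \<omega>)))"

definition BA_algebra :: "real \<Rightarrow> ('x \<Rightarrow> real) \<Rightarrow> nat \<Rightarrow> (nat \<Rightarrow> ('x \<times> 'y) \<times> bool) measure
    \<Rightarrow> (nat \<Rightarrow> ('x \<times> 'y) \<times> bool) measure" where
  "BA_algebra \<epsilon> ph n \<Omega> = vimage_algebra (space \<Omega>)
      (\<lambda>\<omega>. restrict (\<lambda>i. (bin \<epsilon> ph (obsX \<omega> i), obsA \<omega> i)) {..<n}) (count_space UNIV)"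

definition odds_ratio :: "('x \<Rightarrow> real) \<Rightarrow> ('x \<Rightarrow> real) \<Rightarrow> 'x \<Rightarrow> real" where
  "odds_ratio p ph x = (p x / (1 - p x)) / (ph x / (1 - ph x))"

end

theory Submission
  imports Defs
begin

text \<open>Conditionally on the bins and the missingness pattern, the observations are independent and each
  follows the law of its cell (bin \<open>k\<close>, \<open>A = a\<close>). Within a bin the estimated odds vary by less than
  a factor \<open>1 + \<epsilon>\<close> and the true odds are within \<open>exp (\<plusminus>L)\<close> of the estimated ones,
  \<open>L = sup \<bar>log f\<bar>\<close>; by Bayes' rule the score law of a missing point in bin \<open>k\<close> therefore dominates
  \<open>1/R\<close> times the score law of an observed point in bin \<open>k\<close>, with \<open>R = (1 + \<epsilon>) exp (2L) =
  (1 + \<epsilon>)(1 + \<delta>)\<close>. Replacing the scores of the missing points, one at a time, by scores drawn from the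
  observed law costs at most this factor; afterwards the scores within each bin are exchangeable, and
  the weighted quantile covers a missing point with probability at least \<open>1 - \<alpha>\<close>. Hence the conditional
  coverage is at least \<open>(1 - \<alpha>)/R \<ge> 1 - \<alpha> - (\<epsilon> + \<delta> + \<epsilon>\<delta>)\<close>.\<close>

section \<open>Weighted quantiles and bin weights\<close>

lemma wquantile_ge_iff:
  fixes w :: "'i \<Rightarrow> real" and v :: "'i \<Rightarrow> ereal"
  assumes fin: "finite I" and w: "\<And>i. i \<in> I \<Longrightarrow> 0 \<le> w i" and \<beta>: "0 < \<beta>"
  shows "x \<le> wquantile \<beta> w v I \<longleftrightarrow> (\<Sum>i\<in>{i\<in>I. v i < x}. w i) < \<beta>"
proof
  assume x_le: "x \<le> wquantile \<beta> w v I"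
  show "(\<Sum>i\<in>{i\<in>I. v i < x}. w i) < \<beta>"
  proof (rule ccontr)
    assume "\<not> ?thesis"
    hence ge: "\<beta> \<le> (\<Sum>i\<in>{i\<in>I. v i < x}. w i)" by simp
    have nonempty: "{i\<in>I. v i < x} \<noteq> {}"
      using ge \<beta> by (metis empty_iff less_le_not_le sum.empty)
    define t where "t = Max (v ` {i\<in>I. v i < x})"
    have t_less: "t < x"
      using nonempty fin Max_in[of "v ` {i\<in>I. v i < x}"] unfolding t_def by auto
    have "{i\<in>I. v i \<le> t} = {i\<in>I. v i < x}"
      using t_less fin unfolding t_def by (auto intro: Max_ge)
    hence "wquantile \<beta> w v I \<le> t"
      unfolding wquantile_def using ge by (intro Inf_lower) simp
    with x_le t_less show False by simp
  qed
next
  assume less: "(\<Sum>i\<in>{i\<in>I. v i < x}. w i) < \<beta>"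
  show "x \<le> wquantile \<beta> w v I"
    unfolding wquantile_def
  proof (rule Inf_greatest, rule ccontr)
    fix t assume "t \<in> {t. \<beta> \<le> (\<Sum>i\<in>{i\<in>I. v i \<le> t}. w i)}" and "\<not> x \<le> t"
    hence ge: "\<beta> \<le> (\<Sum>i\<in>{i\<in>I. v i \<le> t}. w i)" and "{i\<in>I. v i \<le> t} \<subseteq> {i\<in>I. v i < x}" by auto
    hence "(\<Sum>i\<in>{i\<in>I. v i \<le> t}. w i) \<le> (\<Sum>i\<in>{i\<in>I. v i < x}. w i)"
      using fin w by (intro sum_mono2) auto
    with ge less show False by simp
  qed
qed

definition rank_weight :: "'i set \<Rightarrow> ('i \<Rightarrow> real) \<Rightarrow> ('i \<Rightarrow> real) \<Rightarrow> real \<Rightarrow> real" where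
  "rank_weight L c S x = (\<Sum>l\<in>L. if S l < x then c l else 0)"

definition bin_weight :: "nat \<Rightarrow> (nat \<Rightarrow> int) \<Rightarrow> (nat \<Rightarrow> bool) \<Rightarrow> nat \<Rightarrow> real" where
  "bin_weight n b a i = real (Nk0 n b a (b i)) / (real (N0 n a) * real (Nk n b (b i)))"

definition score_coverage :: "real \<Rightarrow> nat \<Rightarrow> (nat \<Rightarrow> int) \<Rightarrow> (nat \<Rightarrow> bool) \<Rightarrow> (nat \<Rightarrow> real) \<Rightarrow> real" where
  "score_coverage \<beta> n b a S =
     (if N0 n a = 0 then 1 else
      (\<Sum>j\<in>{j\<in>{..<n}. \<not> a j}.
         if rank_weight {l\<in>{..<n}. a l} (bin_weight n b a) S (S j) < \<beta> then 1 else 0) / real (N0 n a))"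

lemma bin_weight_nonneg: "0 \<le> bin_weight n b a i"
  unfolding bin_weight_def by simp

lemma rank_weight_mono:
  assumes "L \<subseteq> L'" "finite L'" "\<And>l. 0 \<le> c l"
  shows "rank_weight L c S x \<le> rank_weight L' c S x"
  unfolding rank_weight_def using assms by (intro sum_mono2) auto

lemma ereal_le_pro_threshold_iff:
  assumes "\<alpha> < 1"
  shows "ereal x \<le> pro_threshold \<alpha> n b a S \<longleftrightarrow>
    rank_weight {l\<in>{..<n}. a l} (bin_weight n b a) S x < 1 - \<alpha>"
proof -
  have "ereal x \<le> pro_threshold \<alpha> n b a S \<longleftrightarrow>
     (\<Sum>i\<in>{i\<in>{..n}. pro_value n S i < ereal x}. pro_weight n b a i) < 1 - \<alpha>"
    unfolding pro_threshold_def using assms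
    by (intro wquantile_ge_iff) (auto simp: pro_weight_def intro!: sum_nonneg divide_nonneg_nonneg)
  also have "(\<Sum>i\<in>{i\<in>{..n}. pro_value n S i < ereal x}. pro_weight n b a i)
     = (\<Sum>i<n. if pro_value n S i < ereal x then pro_weight n b a i else 0)"
    unfolding sum.inter_filter[OF finite_atMost]
    by (simp add: lessThan_Suc_atMost[symmetric] pro_value_def)
  also have "\<dots> = (\<Sum>i\<in>{i\<in>{..<n}. a i}. if S i < x then bin_weight n b a i else 0)"
    unfolding sum.inter_filter[OF finite_lessThan]
    by (intro sum.cong) (auto simp: pro_value_def pro_weight_def bin_weight_def)
  finally show ?thesis unfolding rank_weight_def .
qed

lemma pro_coverage_eq_score_coverage:
  assumes "\<alpha> < 1"
  shows "pro_coverage \<alpha> \<epsilon> ph s n \<omega> =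
    score_coverage (1 - \<alpha>) n (\<lambda>i. bin \<epsilon> ph (obsX \<omega> i)) (obsA \<omega>) (\<lambda>i. s (obsX \<omega> i) (obsY \<omega> i))"
  unfolding pro_coverage_def score_coverage_def pro_set_def Let_def
  by (simp add: ereal_le_pro_threshold_iff[OF assms] cong: sum.cong)

lemma score_coverage_bounds: "0 \<le> score_coverage \<beta> n b a S" "score_coverage \<beta> n b a S \<le> 1"
proof -
  have "(\<Sum>j\<in>{j\<in>{..<n}. \<not> a j}.
      if rank_weight {l\<in>{..<n}. a l} (bin_weight n b a) S (S j) < \<beta> then 1 else 0 :: real)
     \<le> (\<Sum>j\<in>{j\<in>{..<n}. \<not> a j}. 1)" by (intro sum_mono) auto
  also have "\<dots> = real (N0 n a)" unfolding N0_def by simp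
  finally show "score_coverage \<beta> n b a S \<le> 1"
    unfolding score_coverage_def by (auto simp: divide_le_eq)
  show "0 \<le> score_coverage \<beta> n b a S"
    unfolding score_coverage_def by (auto intro!: sum_nonneg divide_nonneg_nonneg)
qed

lemma score_coverage_cong:
  assumes "\<And>i. i < n \<Longrightarrow> b i = b' i" "\<And>i. i < n \<Longrightarrow> a i = a' i" "\<And>i. i < n \<Longrightarrow> S i = S' i"
  shows "score_coverage \<beta> n b a S = score_coverage \<beta> n b' a' S'"
proof -
  have N0: "N0 n a = N0 n a'"
    unfolding N0_def using assms by (intro arg_cong[where f=card]) auto
  have "Nk n b k = Nk n b' k" "Nk0 n b a k = Nk0 n b' a' k" for k
    unfolding Nk_def Nk0_def using assms by (auto intro!: arg_cong[where f=card])
  hence weight: "bin_weight n b a l = bin_weight n b' a' l" if "l < n" for l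
    unfolding bin_weight_def N0 using that assms by simp
  have obs: "{l\<in>{..<n}. a l} = {l\<in>{..<n}. a' l}" and mis: "{j\<in>{..<n}. \<not> a j} = {j\<in>{..<n}. \<not> a' j}"
    using assms by auto
  have "rank_weight {l\<in>{..<n}. a l} (bin_weight n b a) S (S j) =
        rank_weight {l\<in>{..<n}. a' l} (bin_weight n b' a') S' (S' j)" if "j < n" for j
    unfolding rank_weight_def obs using that assms weight by (intro sum.cong) auto
  thus ?thesis
    unfolding score_coverage_def N0 mis by (intro if_cong refl arg_cong2[where f="(/)"] sum.cong) auto
qed

text \<open>Both sides give bin \<open>k\<close> the total weight \<open>Nk0 k / N0\<close>.\<close>
lemma sum_missing_eq_bin_weighted:
  fixes \<pi> :: "nat \<Rightarrow> real"
  assumes N0: "N0 n a > 0"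
    and \<pi>: "\<And>i j. i < n \<Longrightarrow> j < n \<Longrightarrow> b i = b j \<Longrightarrow> \<pi> i = \<pi> j"
  shows "(\<Sum>j\<in>{j\<in>{..<n}. \<not> a j}. \<pi> j) = real (N0 n a) * (\<Sum>i<n. bin_weight n b a i * \<pi> i)"
proof -
  have per_bin: "(\<Sum>j\<in>{j\<in>{..<n}. b j = k}. if \<not> a j then \<pi> j else 0) =
      real (N0 n a) * (\<Sum>i\<in>{i\<in>{..<n}. b i = k}. bin_weight n b a i * \<pi> i)"
    if k: "k \<in> b ` {..<n}" for k
  proof -
    obtain i0 where i0: "i0 < n" "b i0 = k" using k by auto
    have const: "\<pi> j = \<pi> i0" "bin_weight n b a j = bin_weight n b a i0"
      if "j \<in> {j\<in>{..<n}. b j = k}" for j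
      using \<pi>[of j i0] i0 that by (auto simp: bin_weight_def)
    have Nk: "Nk n b k > 0" unfolding Nk_def using i0 by (auto simp: card_gt_0_iff)
    have "(\<Sum>j\<in>{j\<in>{..<n}. b j = k}. if \<not> a j then \<pi> j else 0) =
        (\<Sum>j\<in>{j\<in>{j\<in>{..<n}. b j = k}. \<not> a j}. \<pi> j)"
      by (rule sum.inter_filter[symmetric]) simp
    also have "\<dots> = (\<Sum>j\<in>{j\<in>{..<n}. b j = k \<and> \<not> a j}. \<pi> i0)"
      by (intro sum.cong) (auto intro: const)
    also have "\<dots> = real (Nk0 n b a k) * \<pi> i0" unfolding Nk0_def by simp
    also have "\<dots> = real (N0 n a) * (real (Nk n b k) * (bin_weight n b a i0 * \<pi> i0))"
      using N0 Nk i0 by (simp add: bin_weight_def)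
    also have "\<dots> = real (N0 n a) * (\<Sum>i\<in>{i\<in>{..<n}. b i = k}. bin_weight n b a i0 * \<pi> i0)"
      unfolding Nk_def by simp
    also have "\<dots> = real (N0 n a) * (\<Sum>i\<in>{i\<in>{..<n}. b i = k}. bin_weight n b a i * \<pi> i)"
      by (intro arg_cong2[where f="(*)"] refl sum.cong) (auto simp only: const)
    finally show ?thesis .
  qed
  have "(\<Sum>j\<in>{j\<in>{..<n}. \<not> a j}. \<pi> j) = (\<Sum>j<n. if \<not> a j then \<pi> j else 0)"
    by (rule sum.inter_filter) simp
  also have "\<dots> = (\<Sum>k\<in>b ` {..<n}. \<Sum>j\<in>{j\<in>{..<n}. b j = k}. if \<not> a j then \<pi> j else 0)"
    by (rule sum.image_gen) simp
  also have "\<dots> = real (N0 n a) * (\<Sum>k\<in>b ` {..<n}. \<Sum>i\<in>{i\<in>{..<n}. b i = k}. bin_weight n b a i * \<pi> i)"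
    by (subst sum_distrib_left) (rule sum.cong[OF refl per_bin])
  also have "\<dots> = real (N0 n a) * (\<Sum>i<n. bin_weight n b a i * \<pi> i)"
    by (subst sum.image_gen[of "{..<n}" _ b]) simp_all
  finally show ?thesis .
qed

lemma sum_bin_weight:
  assumes "N0 n a > 0"
  shows "(\<Sum>i<n. bin_weight n b a i) = 1"
proof -
  have "real (N0 n a) = real (N0 n a) * (\<Sum>i<n. bin_weight n b a i)"
    using sum_missing_eq_bin_weighted[OF assms, of b "\<lambda>_. 1"] by (simp add: N0_def)
  thus ?thesis using assms by simp
qed

text \<open>If some index is not covered, take one with the smallest score among the uncovered: every
  strictly smaller score is covered, so the covered weight is already at least \<open>\<beta>\<close>.\<close>
lemma weighted_rank_coverage:
  fixes c S :: "nat \<Rightarrow> real"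
  assumes c: "\<And>i. 0 \<le> c i" and sum_c: "(\<Sum>i<n. c i) = 1" and \<beta>: "\<beta> \<le> 1"
  shows "\<beta> \<le> (\<Sum>i<n. c i * (if rank_weight {..<n} c S (S i) < \<beta> then 1 else 0))"
proof -
  define T where "T = {i\<in>{..<n}. rank_weight {..<n} c S (S i) < \<beta>}"
  have sum_T: "(\<Sum>i<n. c i * (if rank_weight {..<n} c S (S i) < \<beta> then 1 else 0)) = (\<Sum>i\<in>T. c i)"
    unfolding T_def sum.inter_filter[OF finite_lessThan] by (intro sum.cong) auto
  show ?thesis
  proof (cases "T = {..<n}")
    case True
    thus ?thesis using sum_T sum_c \<beta> by simp
  next
    case False
    define m where "m = Min (S ` ({..<n} - T))"
    have "m \<in> S ` ({..<n} - T)" unfolding m_def using False T_def by (intro Min_in) auto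
    then obtain i0 where i0: "i0 \<in> {..<n} - T" "S i0 = m" by auto
    have below_covered: "{l\<in>{..<n}. S l < S i0} \<subseteq> T"
    proof
      fix l assume l: "l \<in> {l\<in>{..<n}. S l < S i0}"
      show "l \<in> T"
      proof (rule ccontr)
        assume "l \<notin> T"
        hence "m \<le> S l" unfolding m_def using l by (intro Min_le) auto
        with l i0 show False by simp
      qed
    qed
    have "\<beta> \<le> rank_weight {..<n} c S (S i0)" using i0 unfolding T_def by auto
    also have "\<dots> = (\<Sum>l\<in>{l\<in>{..<n}. S l < S i0}. c l)"
      unfolding rank_weight_def by (rule sum.inter_filter[symmetric, OF finite_lessThan])
    also have "\<dots> \<le> (\<Sum>i\<in>T. c i)" using below_covered c unfolding T_def by (intro sum_mono2) auto
    finally show ?thesis using sum_T by simp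
  qed
qed

section \<open>The weighted conformal bound on product spaces\<close>

lemma measurable_PiM_component_borel:
  assumes "\<And>i. sets (M i) = sets borel" "i \<in> I"
  shows "(\<lambda>S. S i :: real) \<in> borel_measurable (PiM I M)"
  using measurable_component_singleton[OF assms(2), of M] measurable_cong_sets[OF refl assms(1)]
  by blast

lemma space_PiM_borel:
  assumes "\<And>i. sets (M i) = sets borel"
  shows "space (PiM I M) = PiE I (\<lambda>_. UNIV)"
  using assms[THEN sets_eq_imp_space_eq] by (simp add: space_PiM)

lemma borel_measurable_PiM_rank_weight:
  assumes "\<And>i. sets (M i) = sets borel" "L \<subseteq> I" "j \<in> I"
  shows "(\<lambda>S. rank_weight L c S (S j)) \<in> borel_measurable (PiM I M)"
  unfolding rank_weight_def
proof (intro borel_measurable_sum)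
  fix l assume "l \<in> L"
  have [measurable]: "(\<lambda>S. S l) \<in> borel_measurable (PiM I M)" "(\<lambda>S. S j) \<in> borel_measurable (PiM I M)"
    using assms \<open>l \<in> L\<close> by (auto intro: measurable_PiM_component_borel)
  show "(\<lambda>S. if S l < S j then c l else 0) \<in> borel_measurable (PiM I M)" by measurable
qed

lemma sets_PiM_rank_weight_less:
  assumes "\<And>i. sets (M i) = sets borel" "L \<subseteq> I" "j \<in> I"
  shows "{S \<in> space (PiM I M). rank_weight L c S (S j) < \<beta>} \<in> sets (PiM I M)"
proof -
  have [measurable]: "(\<lambda>S. rank_weight L c S (S j)) \<in> borel_measurable (PiM I M)"
    by (rule borel_measurable_PiM_rank_weight[OF assms])
  show ?thesis by measurable
qed

text \<open>The transposition of \<open>i\<close> and \<open>j\<close> preserves the product measure and exchanges the two events.\<close>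
lemma emeasure_PiM_rank_swap:
  fixes \<rho> :: "nat \<Rightarrow> real measure" and c :: "nat \<Rightarrow> real"
  assumes prob: "\<And>i. prob_space (\<rho> i)" and sets: "\<And>i. sets (\<rho> i) = sets borel"
    and i: "i < n" and j: "j < n" and same_law: "\<rho> i = \<rho> j" and same_weight: "c i = c j"
  shows "emeasure (PiM {..<n} \<rho>) {S \<in> space (PiM {..<n} \<rho>). rank_weight {..<n} c S (S i) < \<beta>}
       = emeasure (PiM {..<n} \<rho>) {S \<in> space (PiM {..<n} \<rho>). rank_weight {..<n} c S (S j) < \<beta>}"
proof -
  define \<tau> where "\<tau> = (\<lambda>m::nat. if m = i then j else if m = j then i else m)"
  have bij: "bij_betw \<tau> {..<n} {..<n}"
    by (rule bij_betw_byWitness[where f'=\<tau>]) (auto simp: \<tau>_def i j)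
  have \<tau>_range: "\<tau> \<in> {..<n} \<rightarrow> {..<n}" unfolding \<tau>_def using i j by auto
  have \<rho>_\<tau>: "\<rho> (\<tau> m) = \<rho> m" for m unfolding \<tau>_def using same_law by auto
  let ?P = "PiM {..<n} \<rho>"
  let ?T = "\<lambda>S. \<lambda>m\<in>{..<n}. S (\<tau> m)"
  have invariant: "distr ?P ?P ?T = ?P"
    using distr_PiM_reindex[of "{..<n}" \<rho> \<tau> "{..<n}", OF prob bij_betw_imp_inj_on[OF bij] \<tau>_range]
    by (simp add: \<rho>_\<tau>)
  have T_meas: "?T \<in> measurable ?P ?P"
  proof (intro measurable_restrict)
    fix m assume "m \<in> {..<n}"
    hence "(\<lambda>S. S (\<tau> m)) \<in> measurable ?P (\<rho> (\<tau> m))"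
      using \<tau>_range by (intro measurable_component_singleton) auto
    thus "(\<lambda>S. S (\<tau> m)) \<in> measurable ?P (\<rho> m)" by (simp add: \<rho>_\<tau>)
  qed
  have \<tau>_j: "\<tau> j = i" unfolding \<tau>_def by simp
  have rank_\<tau>: "rank_weight {..<n} c (?T S) (S i) = rank_weight {..<n} c S (S i)" for S
  proof -
    have "rank_weight {..<n} c (?T S) (S i) = (\<Sum>l<n. (\<lambda>l. if S l < S i then c l else 0) (\<tau> l))"
      unfolding rank_weight_def using i j same_weight by (intro sum.cong) (auto simp: \<tau>_def)
    also have "\<dots> = rank_weight {..<n} c S (S i)"
      unfolding rank_weight_def by (rule sum.reindex_bij_betw[OF bij])
    finally show ?thesis .
  qed
  have preimage: "?T -` {S \<in> space ?P. rank_weight {..<n} c S (S j) < \<beta>} \<inter> space ?P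
      = {S \<in> space ?P. rank_weight {..<n} c S (S i) < \<beta>}"
    using measurable_space[OF T_meas] j by (auto simp: rank_\<tau> \<tau>_j)
  have "emeasure ?P {S \<in> space ?P. rank_weight {..<n} c S (S j) < \<beta>}
      = emeasure (distr ?P ?P ?T) {S \<in> space ?P. rank_weight {..<n} c S (S j) < \<beta>}"
    by (simp add: invariant)
  also have "\<dots> = emeasure ?P (?T -` {S \<in> space ?P. rank_weight {..<n} c S (S j) < \<beta>} \<inter> space ?P)"
    using sets_PiM_rank_weight_less[of \<rho> "{..<n}" "{..<n}" j c \<beta>] sets j
    by (intro emeasure_distr[OF T_meas]) auto
  also have "\<dots> = emeasure ?P {S \<in> space ?P. rank_weight {..<n} c S (S i) < \<beta>}"
    by (simp only: preimage)
  finally show ?thesis by simp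
qed

text \<open>Integrate out coordinate \<open>j\<close> first and compare the sections.\<close>
lemma emeasure_PiM_insert_dominated:
  fixes \<rho> \<rho>' :: "'i \<Rightarrow> 'a measure"
  assumes prob: "\<And>i. prob_space (\<rho> i)" "\<And>i. prob_space (\<rho>' i)"
    and L: "finite L" "j \<notin> L" and agree: "\<And>l. l \<in> L \<Longrightarrow> \<rho>' l = \<rho> l"
    and sets_j: "sets (\<rho>' j) = sets (\<rho> j)"
    and dominated: "\<And>A. A \<in> sets (\<rho> j) \<Longrightarrow> ennreal r * emeasure (\<rho>' j) A \<le> emeasure (\<rho> j) A"
    and E: "E \<in> sets (PiM (insert j L) \<rho>)"
  shows "ennreal r * emeasure (PiM (insert j L) \<rho>') E \<le> emeasure (PiM (insert j L) \<rho>) E"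
proof -
  interpret P: product_sigma_finite \<rho>
    unfolding product_sigma_finite_def using prob by (simp add: prob_space_imp_sigma_finite)
  interpret P': product_sigma_finite \<rho>'
    unfolding product_sigma_finite_def using prob by (simp add: prob_space_imp_sigma_finite)
  have same_L: "PiM L \<rho>' = PiM L \<rho>" using agree by (intro PiM_cong) auto
  have "sets (PiM (insert j L) \<rho>') = sets (PiM (insert j L) \<rho>)"
    using agree sets_j by (intro sets_PiM_cong) auto
  hence E': "E \<in> sets (PiM (insert j L) \<rho>')" using E by simp
  have space_j: "space (\<rho>' j) = space (\<rho> j)" using sets_j by (rule sets_eq_imp_space_eq)
  define slice where "slice x = (\<lambda>y. x(j := y)) -` E \<inter> space (\<rho> j)" for x
  have slice: "slice x \<in> sets (\<rho> j)" if "x \<in> space (PiM L \<rho>)" for x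
    unfolding slice_def using measurable_component_update[OF that L(2)] E by (rule measurable_sets)
  have indicator_slice: "indicator E (x(j := y)) = (indicator (slice x) y :: ennreal)"
    if "y \<in> space (\<rho> j)" for x y
    using that by (simp add: slice_def indicator_def)
  have "ennreal r * emeasure (PiM (insert j L) \<rho>') E
      = (\<integral>\<^sup>+S. ennreal r * indicator E S \<partial>PiM (insert j L) \<rho>')"
    by (rule nn_integral_cmult_indicator[OF E', symmetric])
  also have "\<dots> = (\<integral>\<^sup>+x. \<integral>\<^sup>+y. ennreal r * indicator E (x(j := y)) \<partial>\<rho>' j \<partial>PiM L \<rho>)"
    unfolding same_L[symmetric] using E'
    by (intro P'.product_nn_integral_insert L borel_measurable_times_ennreal borel_measurable_indicator)
      simp_all
  also have "\<dots> \<le> (\<integral>\<^sup>+x. \<integral>\<^sup>+y. indicator E (x(j := y)) \<partial>\<rho> j \<partial>PiM L \<rho>)"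
  proof (intro nn_integral_mono)
    fix x assume x: "x \<in> space (PiM L \<rho>)"
    have "(\<integral>\<^sup>+y. ennreal r * indicator E (x(j := y)) \<partial>\<rho>' j) = (\<integral>\<^sup>+y. ennreal r * indicator (slice x) y \<partial>\<rho>' j)"
      using space_j by (intro nn_integral_cong) (simp add: indicator_slice)
    also have "\<dots> = ennreal r * emeasure (\<rho>' j) (slice x)"
      using slice[OF x] sets_j by (intro nn_integral_cmult_indicator) auto
    also have "\<dots> \<le> emeasure (\<rho> j) (slice x)" by (rule dominated[OF slice[OF x]])
    also have "\<dots> = (\<integral>\<^sup>+y. indicator E (x(j := y)) \<partial>\<rho> j)"
      using slice[OF x] by (simp add: indicator_slice cong: nn_integral_cong)
    finally show "(\<integral>\<^sup>+y. ennreal r * indicator E (x(j := y)) \<partial>\<rho>' j) \<le> (\<integral>\<^sup>+y. indicator E (x(j := y)) \<partial>\<rho> j)" .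
  qed
  also have "\<dots> = emeasure (PiM (insert j L) \<rho>) E"
    using E by (subst P.product_nn_integral_insert[OF L, symmetric]) simp_all
  finally show ?thesis .
qed

lemma emeasure_PiM_rank_replace:
  fixes \<rho> \<rho>' :: "nat \<Rightarrow> real measure" and c :: "nat \<Rightarrow> real"
  assumes prob: "\<And>i. prob_space (\<rho> i)" "\<And>i. prob_space (\<rho>' i)"
    and sets: "\<And>i. sets (\<rho> i) = sets borel" "\<And>i. sets (\<rho>' i) = sets borel"
    and L: "L \<subseteq> {..<n}" and j: "j < n" "j \<notin> L" and agree: "\<And>l. l \<in> L \<Longrightarrow> \<rho>' l = \<rho> l"
    and dominated: "\<And>A. A \<in> sets borel \<Longrightarrow> ennreal r * emeasure (\<rho>' j) A \<le> emeasure (\<rho> j) A"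
  shows "ennreal r * emeasure (PiM {..<n} \<rho>') {S \<in> space (PiM {..<n} \<rho>'). rank_weight L c S (S j) < \<beta>}
       \<le> emeasure (PiM {..<n} \<rho>) {S \<in> space (PiM {..<n} \<rho>). rank_weight L c S (S j) < \<beta>}"
proof -
  define J where "J = insert j L"
  have J: "J \<subseteq> {..<n}" "finite J" using L j unfolding J_def by (auto intro: finite_subset)
  define E where "E = {S \<in> PiE J (\<lambda>_. UNIV :: real set). rank_weight L c S (S j) < \<beta>}"
  have marginal: "emeasure (PiM {..<n} M) {S \<in> space (PiM {..<n} M). rank_weight L c S (S j) < \<beta>}
      = emeasure (PiM J M) E"
    if "\<And>i. prob_space (M i)" "\<And>i. sets (M i) = sets borel" for M :: "nat \<Rightarrow> real measure"
  proof -
    interpret product_prob_space M "{..<n}" by (rule product_prob_spaceI[OF that(1)])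
    have "{S \<in> space (PiM {..<n} M). rank_weight L c S (S j) < \<beta>} = prod_emb {..<n} M J E"
      using J unfolding prod_emb_def E_def J_def rank_weight_def space_PiM_borel[OF that(2)]
      by (auto simp: space_PiM sets_eq_imp_space_eq[OF that(2)] intro!: sum.cong)
    moreover have "E \<in> sets (PiM J M)"
      using sets_PiM_rank_weight_less[of M L J j c \<beta>, OF that(2)] unfolding space_PiM_borel[OF that(2)] E_def J_def
      by auto
    ultimately show ?thesis using emeasure_PiM_emb'[OF J] by simp
  qed
  have "E \<in> sets (PiM (insert j L) \<rho>)"
    using sets_PiM_rank_weight_less[of \<rho> L J j c \<beta>, OF sets(1)] unfolding space_PiM_borel[OF sets(1)] E_def J_def
    by auto
  hence "ennreal r * emeasure (PiM J \<rho>') E \<le> emeasure (PiM J \<rho>) E"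
    unfolding J_def using prob L j agree sets dominated
    by (intro emeasure_PiM_insert_dominated) (auto intro: finite_subset)
  thus ?thesis using marginal[OF prob(1) sets(1)] marginal[OF prob(2) sets(2)] by simp
qed

lemma integral_score_coverage:
  fixes \<rho> :: "nat \<Rightarrow> real measure"
  assumes prob: "\<And>i. prob_space (\<rho> i)" and sets: "\<And>i. sets (\<rho> i) = sets borel"
    and N0: "N0 n a > 0"
  shows "(\<integral>S. score_coverage \<beta> n b a S \<partial>PiM {..<n} \<rho>) =
    (\<Sum>j\<in>{j\<in>{..<n}. \<not> a j}. measure (PiM {..<n} \<rho>)
       {S \<in> space (PiM {..<n} \<rho>). rank_weight {l\<in>{..<n}. a l} (bin_weight n b a) S (S j) < \<beta>})
    / real (N0 n a)"
proof -
  let ?P = "PiM {..<n} \<rho>"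
  interpret prob_space ?P by (intro prob_space_PiM prob)
  define D where "D j = {S \<in> space ?P. rank_weight {l\<in>{..<n}. a l} (bin_weight n b a) S (S j) < \<beta>}"
    for j
  have D: "D j \<in> sets ?P" if "j < n" for j
    unfolding D_def using that by (intro sets_PiM_rank_weight_less[of \<rho>] sets) auto
  have "score_coverage \<beta> n b a S = (\<Sum>j\<in>{j\<in>{..<n}. \<not> a j}.
      if rank_weight {l\<in>{..<n}. a l} (bin_weight n b a) S (S j) < \<beta> then 1 else 0) / real (N0 n a)"
    for S using N0 unfolding score_coverage_def by simp
  also have "\<dots> S = (\<Sum>j\<in>{j\<in>{..<n}. \<not> a j}. indicator (D j) S) / real (N0 n a)"
    if "S \<in> space ?P" for S
    using that by (intro arg_cong2[where f="(/)"] sum.cong refl) (auto simp: D_def indicator_def)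
  finally have "(\<integral>S. score_coverage \<beta> n b a S \<partial>?P) =
      (\<integral>S. (\<Sum>j\<in>{j\<in>{..<n}. \<not> a j}. indicator (D j) S) / real (N0 n a) \<partial>?P)"
    by (intro Bochner_Integration.integral_cong) auto
  also have "\<dots> = (\<Sum>j\<in>{j\<in>{..<n}. \<not> a j}. measure ?P (D j)) / real (N0 n a)"
    using D sets.sets_into_space[OF D]
    by (subst integral_divide_zero, subst Bochner_Integration.integral_sum)
      (auto intro!: sum.cong simp: Int_absorb2 less_top[symmetric])
  finally show ?thesis unfolding D_def .
qed

text \<open>Points of the same bin have equally likely rank events; averaging the pointwise bound
  \<open>weighted_rank_coverage\<close> then yields \<open>\<beta>\<close>.\<close>
lemma exchangeable_rank_bound:
  fixes \<rho> :: "int \<Rightarrow> real measure"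
  assumes prob: "\<And>k. prob_space (\<rho> k)" and sets: "\<And>k. sets (\<rho> k) = sets borel"
    and N0: "N0 n a > 0" and \<beta>: "\<beta> \<le> 1"
  shows "real (N0 n a) * \<beta> \<le> (\<Sum>j\<in>{j\<in>{..<n}. \<not> a j}. measure (PiM {..<n} (\<lambda>i. \<rho> (b i)))
      {S \<in> space (PiM {..<n} (\<lambda>i. \<rho> (b i))). rank_weight {..<n} (bin_weight n b a) S (S j) < \<beta>})"
proof -
  let ?P = "PiM {..<n} (\<lambda>i. \<rho> (b i))"
  let ?c = "bin_weight n b a"
  interpret prob_space ?P by (intro prob_space_PiM prob)
  define D where "D i = {S \<in> space ?P. rank_weight {..<n} ?c S (S i) < \<beta>}" for i
  have D: "D i \<in> sets ?P" if "i < n" for i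
    unfolding D_def using that by (intro sets_PiM_rank_weight_less[of "\<lambda>i. \<rho> (b i)"] sets) auto
  have integrable: "integrable ?P (indicator (D i) :: _ \<Rightarrow> real)" if "i < n" for i
    using D[OF that] by (simp add: less_top[symmetric])
  have exchangeable: "measure ?P (D i) = measure ?P (D j)" if "i < n" "j < n" "b i = b j" for i j
    using emeasure_PiM_rank_swap[of "\<lambda>i. \<rho> (b i)" i n j ?c \<beta>] prob sets that
    unfolding D_def by (simp add: emeasure_eq_measure bin_weight_def)
  have "\<beta> \<le> (\<integral>S. (\<Sum>i<n. ?c i * indicator (D i) S) \<partial>?P)"
  proof (rule integral_ge_const)
    show "integrable ?P (\<lambda>S. \<Sum>i<n. ?c i * indicator (D i) S)"
      using integrable by (intro Bochner_Integration.integrable_sum integrable_mult_right) auto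
    show "AE S in ?P. \<beta> \<le> (\<Sum>i<n. ?c i * indicator (D i) S)"
    proof (rule AE_I2)
      fix S assume "S \<in> space ?P"
      have "\<beta> \<le> (\<Sum>i<n. ?c i * (if rank_weight {..<n} ?c S (S i) < \<beta> then 1 else 0))"
        by (rule weighted_rank_coverage[OF bin_weight_nonneg sum_bin_weight[OF N0] \<beta>])
      also have "\<dots> = (\<Sum>i<n. ?c i * indicator (D i) S)"
        using \<open>S \<in> space ?P\<close> by (intro sum.cong) (auto simp: D_def indicator_def)
      finally show "\<beta> \<le> (\<Sum>i<n. ?c i * indicator (D i) S)" .
    qed
  qed
  also have "\<dots> = (\<Sum>i<n. ?c i * measure ?P (D i))"
    using integrable D sets.sets_into_space[OF D]
    by (subst Bochner_Integration.integral_sum) (auto intro!: sum.cong simp: Int_absorb2)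
  finally have "real (N0 n a) * \<beta> \<le> real (N0 n a) * (\<Sum>i<n. ?c i * measure ?P (D i))"
    by (intro mult_left_mono) simp_all
  also have "\<dots> = (\<Sum>j\<in>{j\<in>{..<n}. \<not> a j}. measure ?P (D j))"
    by (rule sum_missing_eq_bin_weighted[OF N0 exchangeable, symmetric])
  finally show ?thesis unfolding D_def .
qed

text \<open>Replacing the score law of each missing point by the observed law of its bin costs a factor
  \<open>r\<close>, after which the scores are exchangeable within bins.\<close>
lemma score_coverage_integral_ge:
  fixes \<rho>T \<rho>F :: "int \<Rightarrow> real measure"
  assumes probT: "\<And>k. prob_space (\<rho>T k)" and probF: "\<And>k. prob_space (\<rho>F k)"
    and setsT: "\<And>k. sets (\<rho>T k) = sets borel" and setsF: "\<And>k. sets (\<rho>F k) = sets borel"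
    and dominated: "\<And>k A. A \<in> sets borel \<Longrightarrow> ennreal r * emeasure (\<rho>T k) A \<le> emeasure (\<rho>F k) A"
    and r: "0 \<le> r" and \<beta>: "\<beta> \<le> 1" and N0: "N0 n a > 0"
  shows "r * \<beta> \<le> (\<integral>S. score_coverage \<beta> n b a S \<partial>PiM {..<n} (\<lambda>i. if a i then \<rho>T (b i) else \<rho>F (b i)))"
proof -
  define \<rho> where "\<rho> i = (if a i then \<rho>T (b i) else \<rho>F (b i))" for i
  let ?P = "PiM {..<n} \<rho>" and ?P' = "PiM {..<n} (\<lambda>i. \<rho>T (b i))"
  let ?U = "{j\<in>{..<n}. \<not> a j}" and ?c = "bin_weight n b a"
  have prob: "prob_space (\<rho> i)" and sets: "sets (\<rho> i) = sets borel" for i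
    unfolding \<rho>_def using probT probF setsT setsF by auto
  interpret P: prob_space ?P by (intro prob_space_PiM prob)
  interpret P': prob_space ?P' by (intro prob_space_PiM probT)
  have space_P: "space ?P = PiE {..<n} (\<lambda>_. UNIV)" and space_P': "space ?P' = PiE {..<n} (\<lambda>_. UNIV)"
    using sets setsT by (simp_all add: space_PiM_borel)
  define D where "D j = {S \<in> PiE {..<n} (\<lambda>_. UNIV). rank_weight {l\<in>{..<n}. a l} ?c S (S j) < \<beta>}"
    for j
  define D' where "D' j = {S \<in> PiE {..<n} (\<lambda>_. UNIV). rank_weight {..<n} ?c S (S j) < \<beta>}" for j
  have D_sets: "D j \<in> sets ?P'" if "j < n" for j
    using sets_PiM_rank_weight_less[of "\<lambda>i. \<rho>T (b i)" "{l\<in>{..<n}. a l}" "{..<n}" j ?c \<beta>] setsT that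
    by (auto simp: D_def space_P')
  have replaced: "r * measure ?P' (D j) \<le> measure ?P (D j)" if "j \<in> ?U" for j
  proof -
    have "ennreal r * emeasure ?P' (D j) \<le> emeasure ?P (D j)"
      using emeasure_PiM_rank_replace[of \<rho> "\<lambda>i. \<rho>T (b i)" "{l\<in>{..<n}. a l}" n j r ?c \<beta>]
        that prob sets probT setsT dominated
      by (auto simp: D_def space_P space_P' \<rho>_def)
    thus ?thesis using r by (simp add: P.emeasure_eq_measure P'.emeasure_eq_measure ennreal_mult'[symmetric])
  qed
  have "r * (real (N0 n a) * \<beta>) \<le> r * (\<Sum>j\<in>?U. measure ?P' (D' j))"
    using exchangeable_rank_bound[of \<rho>T n a \<beta> b, OF probT setsT N0 \<beta>] r
    by (intro mult_left_mono) (simp_all add: D'_def space_P')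
  also have "\<dots> \<le> (\<Sum>j\<in>?U. r * measure ?P' (D j))"
    unfolding sum_distrib_left using r D_sets
    by (intro sum_mono mult_left_mono P'.finite_measure_mono)
      (auto simp: D_def D'_def intro: order.strict_trans1[OF rank_weight_mono] bin_weight_nonneg)
  also have "\<dots> \<le> (\<Sum>j\<in>?U. measure ?P (D j))"
    by (intro sum_mono replaced)
  also have "\<dots> = real (N0 n a) * (\<integral>S. score_coverage \<beta> n b a S \<partial>?P)"
    using integral_score_coverage[of \<rho> n a \<beta> b, OF prob sets N0] N0 by (simp add: D_def space_P)
  finally show ?thesis using N0 unfolding \<rho>_def by (simp add: mult.left_commute)
qed

lemma borel_measurable_score_coverage:
  assumes "\<And>i. sets (M i) = sets borel"
  shows "score_coverage \<beta> n b a \<in> borel_measurable (PiM {..<n} M)"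
proof -
  have [measurable]: "(\<lambda>S. rank_weight {l\<in>{..<n}. a l} (bin_weight n b a) S (S j)) \<in> borel_measurable (PiM {..<n} M)"
    if "j < n" for j
    using that by (intro borel_measurable_PiM_rank_weight assms) auto
  show ?thesis unfolding score_coverage_def by measurable
qed

lemma indicator_PiE_eq_prod:
  assumes "\<omega> \<in> extensional I" and "finite I"
  shows "indicator (PiE I A) \<omega> = (\<Prod>i\<in>I. indicator (A i) (\<omega> i) :: ennreal)"
proof (cases "\<forall>i\<in>I. \<omega> i \<in> A i")
  case True
  thus ?thesis using assms by (simp add: PiE_def)
next
  case False
  then obtain i where i: "i \<in> I" "\<omega> i \<notin> A i" by auto
  hence "\<omega> \<notin> PiE I A" by auto
  moreover have "(\<Prod>i\<in>I. indicator (A i) (\<omega> i) :: ennreal) = 0"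
    using i assms(2) by (intro prod_zero bexI[where x=i]) auto
  ultimately show ?thesis by simp
qed

lemma PiM_density_eq_density_prod:
  fixes M :: "'a measure"
  assumes fin: "finite I" and M: "prob_space M" and f: "\<And>i. f i \<in> borel_measurable M"
    and prob: "\<And>i. prob_space (density M (f i))"
  shows "PiM I (\<lambda>i. density M (f i)) = density (PiM I (\<lambda>_. M)) (\<lambda>\<omega>. \<Prod>i\<in>I. f i (\<omega> i))"
proof -
  interpret N: product_sigma_finite "\<lambda>i. density M (f i)"
    unfolding product_sigma_finite_def using prob by (simp add: prob_space_imp_sigma_finite)
  interpret MM: product_sigma_finite "\<lambda>_. M"
    unfolding product_sigma_finite_def using M by (simp add: prob_space_imp_sigma_finite)
  have [measurable]: "f i \<in> borel_measurable M" for i by (rule f)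
  show ?thesis
  proof (rule N.PiM_eqI[symmetric, OF fin])
    show "sets (density (PiM I (\<lambda>_. M)) (\<lambda>\<omega>. \<Prod>i\<in>I. f i (\<omega> i))) = sets (PiM I (\<lambda>i. density M (f i)))"
      by (simp add: sets_PiM_cong[OF refl, of _ "\<lambda>_. M" "\<lambda>i. density M (f i)"])
  next
    fix A assume "\<And>i. i \<in> I \<Longrightarrow> A i \<in> sets (density M (f i))"
    hence A[measurable]: "\<And>i. i \<in> I \<Longrightarrow> A i \<in> sets M" by simp
    have "emeasure (density (PiM I (\<lambda>_. M)) (\<lambda>\<omega>. \<Prod>i\<in>I. f i (\<omega> i))) (PiE I A)
        = (\<integral>\<^sup>+\<omega>. (\<Prod>i\<in>I. f i (\<omega> i)) * indicator (PiE I A) \<omega> \<partial>PiM I (\<lambda>_. M))"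
      using A by (intro emeasure_density sets_PiM_I_finite fin) measurable
    also have "\<dots> = (\<integral>\<^sup>+\<omega>. (\<Prod>i\<in>I. f i (\<omega> i) * indicator (A i) (\<omega> i)) \<partial>PiM I (\<lambda>_. M))"
    proof (rule nn_integral_cong)
      fix \<omega> assume "\<omega> \<in> space (PiM I (\<lambda>_. M))"
      hence "\<omega> \<in> extensional I" by (simp add: space_PiM PiE_def)
      thus "(\<Prod>i\<in>I. f i (\<omega> i)) * indicator (PiE I A) \<omega> = (\<Prod>i\<in>I. f i (\<omega> i) * indicator (A i) (\<omega> i))"
        by (simp add: indicator_PiE_eq_prod[OF _ fin] prod.distrib)
    qed
    also have "\<dots> = (\<Prod>i\<in>I. \<integral>\<^sup>+x. f i x * indicator (A i) x \<partial>M)"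
      by (rule MM.product_nn_integral_prod[OF fin]) measurable
    also have "\<dots> = (\<Prod>i\<in>I. emeasure (density M (f i)) (A i))"
      by (intro prod.cong refl emeasure_density[symmetric] f A)
    finally show "emeasure (density (PiM I (\<lambda>_. M)) (\<lambda>\<omega>. \<Prod>i\<in>I. f i (\<omega> i))) (PiE I A)
      = (\<Prod>i\<in>I. emeasure (density M (f i)) (A i))" .
  qed
qed

text \<open>Apply the hypothesis to the \<open>F\<close>-measurable set where the conditional expectation is
  below \<open>c\<close>: there the integral of \<open>c - E[f|F]\<close> is nonpositive, so the set is null.\<close>
lemma AE_const_le_real_cond_exp:
  fixes f :: "'a \<Rightarrow> real"
  assumes "prob_space M" and sub: "subalgebra M F" and f: "integrable M f"
    and ge: "\<And>A. A \<in> sets F \<Longrightarrow> c * measure M A \<le> (\<integral>x\<in>A. f x \<partial>M)"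
  shows "AE x in M. c \<le> real_cond_exp M F f x"
proof -
  interpret prob_space M by fact
  interpret finite_measure_subalgebra M F by unfold_locales (rule sub)
  let ?h = "real_cond_exp M F f"
  define E where "E = {x \<in> space M. ?h x < c}"
  have EF: "E \<in> sets F"
  proof -
    have "{x \<in> space F. ?h x < c} \<in> sets F" by measurable
    thus ?thesis using sub unfolding E_def subalgebra_def by simp
  qed
  have EM: "E \<in> sets M" using EF sub unfolding subalgebra_def by auto
  have h: "integrable M ?h" by (rule real_cond_exp_int(1)[OF f])
  define u where "u x = (c - ?h x) * indicator E x" for x
  have u: "integrable M u" unfolding u_def using h EM by (intro integrable_real_mult_indicator) auto
  have u_nonneg: "0 \<le> u x" for x unfolding u_def E_def by (auto simp: indicator_def)
  have "integral\<^sup>L M u = c * measure M E - (\<integral>x\<in>E. ?h x \<partial>M)"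
  proof -
    have "integral\<^sup>L M u = (\<integral>x. c * indicator E x - ?h x * indicator E x \<partial>M)"
      unfolding u_def by (simp add: algebra_simps)
    also have "\<dots> = (\<integral>x. c * indicator E x \<partial>M) - (\<integral>x. ?h x * indicator E x \<partial>M)"
      using h EM by (intro Bochner_Integration.integral_diff)
        (auto intro!: integrable_real_mult_indicator simp: less_top[symmetric])
    also have "\<dots> = c * measure M E - (\<integral>x\<in>E. ?h x \<partial>M)"
      using EM by (simp add: set_lebesgue_integral_def mult.commute)
    finally show ?thesis .
  qed
  also have "\<dots> \<le> 0" using ge[OF EF] real_cond_exp_intA[OF f EF] by simp
  finally have "integral\<^sup>L M u \<le> 0" .
  moreover have "0 \<le> integral\<^sup>L M u" using u_nonneg by simp
  ultimately have "AE x in M. u x = 0"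
    using integral_nonneg_eq_0_iff_AE[OF u] u_nonneg by simp
  with AE_space show ?thesis
    by eventually_elim (auto simp: u_def E_def indicator_def split: if_splits)
qed

lemma zk_le_iff:
  assumes "0 < y" "y < 1" "0 < \<epsilon>"
  shows "zk \<epsilon> k \<le> y \<longleftrightarrow> (1 + \<epsilon>) powi k \<le> y / (1 - y)"
proof -
  define t where "t = (1 + \<epsilon>) powi k"
  have "0 < t" unfolding t_def using assms by simp
  thus ?thesis using assms unfolding zk_def t_def[symmetric]
    by (simp add: divide_le_eq le_divide_eq algebra_simps)
qed

lemma less_zk_iff:
  assumes "0 < y" "y < 1" "0 < \<epsilon>"
  shows "y < zk \<epsilon> k \<longleftrightarrow> y / (1 - y) < (1 + \<epsilon>) powi k"
proof -
  define t where "t = (1 + \<epsilon>) powi k"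
  have "0 < t" unfolding t_def using assms by simp
  thus ?thesis using assms unfolding zk_def t_def[symmetric]
    by (simp add: less_divide_eq divide_less_eq algebra_simps)
qed

text \<open>On the odds scale the bins are the intervals \<open>[(1 + \<epsilon>)^k, (1 + \<epsilon>)^(k+1))\<close>.\<close>
lemma zk_interval_iff_floor:
  assumes y: "0 < y" "y < 1" and \<epsilon>: "0 < \<epsilon>"
  shows "(zk \<epsilon> k \<le> y \<and> y < zk \<epsilon> (k + 1)) \<longleftrightarrow> k = \<lfloor>log (1 + \<epsilon>) (y / (1 - y))\<rfloor>"
proof -
  define u where "u = y / (1 - y)"
  have u: "0 < u" unfolding u_def using y by simp
  have q: "1 < 1 + \<epsilon>" using \<epsilon> by simp
  have powi_powr: "(1 + \<epsilon>) powi m = (1 + \<epsilon>) powr real_of_int m" for m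
    using \<epsilon> by (subst powr_real_of_int') auto
  have "(zk \<epsilon> k \<le> y \<and> y < zk \<epsilon> (k + 1)) \<longleftrightarrow> ((1 + \<epsilon>) powi k \<le> u \<and> u < (1 + \<epsilon>) powi (k + 1))"
    using zk_le_iff[OF assms] less_zk_iff[OF assms] unfolding u_def by simp
  also have "\<dots> \<longleftrightarrow> (real_of_int k \<le> log (1 + \<epsilon>) u \<and> log (1 + \<epsilon>) u < real_of_int k + 1)"
    unfolding powi_powr using le_log_iff[OF q u, of "real_of_int k"] log_less_iff[OF q u, of "real_of_int (k + 1)"]
    by simp
  also have "\<dots> \<longleftrightarrow> k = \<lfloor>log (1 + \<epsilon>) u\<rfloor>" by (simp add: floor_eq_iff eq_commute[of k])
  finally show ?thesis unfolding u_def .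
qed

lemma bin_eq_floor:
  assumes "0 < ph x" "ph x < 1" "0 < \<epsilon>"
  shows "bin \<epsilon> ph x = \<lfloor>log (1 + \<epsilon>) (ph x / (1 - ph x))\<rfloor>"
  unfolding bin_def using zk_interval_iff_floor[OF assms] by (intro the_equality) auto

lemma bin_odds_bounds:
  assumes "0 < ph x" "ph x < 1" "0 < \<epsilon>"
  shows "(1 + \<epsilon>) powi (bin \<epsilon> ph x) \<le> ph x / (1 - ph x)"
    and "ph x / (1 - ph x) < (1 + \<epsilon>) powi (bin \<epsilon> ph x + 1)"
  using zk_interval_iff_floor[OF assms, of "bin \<epsilon> ph x"] bin_eq_floor[of ph x, OF assms]
    zk_le_iff[OF assms] less_zk_iff[OF assms]
  by auto

lemma slack_le_div_odds:
  fixes \<alpha> \<epsilon> \<delta> :: real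
  assumes "0 \<le> \<alpha>" "0 \<le> \<epsilon>" "0 \<le> \<delta>"
  shows "1 - \<alpha> - (\<epsilon> + \<delta> + \<epsilon> * \<delta>) \<le> (1 - \<alpha>) / ((1 + \<epsilon>) * (1 + \<delta>))"
proof -
  define d where "d = \<epsilon> + \<delta> + \<epsilon> * \<delta>"
  have d: "0 \<le> d" and R: "(1 + \<epsilon>) * (1 + \<delta>) = 1 + d"
    unfolding d_def using assms by (simp_all add: algebra_simps)
  have "((1 - \<alpha>) - d) * (1 + d) = (1 - \<alpha>) - d * (\<alpha> + d)" by (simp add: algebra_simps)
  also have "\<dots> \<le> 1 - \<alpha>" using mult_nonneg_nonneg[of d "\<alpha> + d"] d assms by simp
  finally show ?thesis unfolding R d_def[symmetric] using d by (simp add: le_divide_eq)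
qed

section \<open>The missing-at-random model\<close>

locale mar_setting =
  fixes MX :: "'x measure" and MY :: "'y measure" and Q :: "('x \<times> 'y) measure"
    and p ph :: "'x \<Rightarrow> real" and s :: "'x \<Rightarrow> 'y \<Rightarrow> real" and \<alpha> \<epsilon> :: real
  assumes Q_prob: "prob_space Q"
    and sets_Q: "sets Q = sets (MX \<Otimes>\<^sub>M MY)"
    and p_measurable: "p \<in> borel_measurable MX"
    and ph_measurable: "ph \<in> borel_measurable MX"
    and s_measurable: "(\<lambda>(x, y). s x y) \<in> borel_measurable (MX \<Otimes>\<^sub>M MY)"
    and p_range: "\<forall>x\<in>space MX. 0 < p x \<and> p x < 1"
    and ph_range: "\<forall>x\<in>space MX. 0 < ph x \<and> ph x < 1"
    and \<alpha>: "0 < \<alpha>" "\<alpha> < 1" and \<epsilon>: "0 < \<epsilon>"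
    and log_odds_bdd: "bdd_above ((\<lambda>x. \<bar>ln (odds_ratio p ph x)\<bar>) ` space MX)"
begin

abbreviation Obs :: "(('x \<times> 'y) \<times> bool) measure" where
  "Obs \<equiv> mar_obs Q p"

lemma space_Q: "space Q = space MX \<times> space MY"
  using sets_eq_imp_space_eq[OF sets_Q] by (simp add: space_pair_measure)

lemma measurable_Q_fst: "f \<in> measurable MX N \<Longrightarrow> (\<lambda>u. f (fst u)) \<in> measurable Q N"
  using measurable_comp[OF measurable_fst, of f MX N MY]
  by (simp add: comp_def measurable_cong_sets[OF sets_Q refl])

lemma p_fst_measurable[measurable]: "(\<lambda>u. p (fst u)) \<in> borel_measurable Q"
  by (rule measurable_Q_fst[OF p_measurable])

lemma score_measurable[measurable]: "(\<lambda>u. s (fst u) (snd u)) \<in> borel_measurable Q"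
  using s_measurable by (simp add: case_prod_beta' measurable_cong_sets[OF sets_Q refl])

lemma sets_mar_obs[measurable_cong]: "sets Obs = sets (Q \<Otimes>\<^sub>M count_space UNIV)"
  unfolding mar_obs_def by simp

lemma space_mar_obs: "space Obs = space Q \<times> UNIV"
  unfolding mar_obs_def by (simp add: space_pair_measure)

lemma nn_integral_mar_obs:
  assumes h: "h \<in> borel_measurable (Q \<Otimes>\<^sub>M count_space UNIV)"
  shows "(\<integral>\<^sup>+z. h z \<partial>Obs) =
    (\<integral>\<^sup>+u. ennreal (p (fst u)) * h (u, True) + ennreal (1 - p (fst u)) * h (u, False) \<partial>Q)"
proof -
  interpret sigma_finite_measure "count_space (UNIV :: bool set)"
    by (rule sigma_finite_measure_count_space_countable) simp
  define w :: "('x \<times> 'y) \<times> bool \<Rightarrow> ennreal" where "w = (\<lambda>((x, y), a). ennreal (if a then p x else 1 - p x))"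
  have w[measurable]: "w \<in> borel_measurable (Q \<Otimes>\<^sub>M count_space UNIV)"
  proof -
    have "(\<lambda>z. ennreal (if snd z then p (fst (fst z)) else 1 - p (fst (fst z))))
        \<in> borel_measurable (Q \<Otimes>\<^sub>M count_space UNIV)"
      by measurable
    thus ?thesis unfolding w_def by (simp add: case_prod_beta')
  qed
  have "(\<integral>\<^sup>+z. h z \<partial>Obs) = (\<integral>\<^sup>+z. w z * h z \<partial>(Q \<Otimes>\<^sub>M count_space UNIV))"
    unfolding mar_obs_def w_def[symmetric] by (rule nn_integral_density[OF w h])
  also have "\<dots> = (\<integral>\<^sup>+u. \<integral>\<^sup>+a. w (u, a) * h (u, a) \<partial>count_space UNIV \<partial>Q)"
    by (rule nn_integral_fst[symmetric]) (use h in measurable)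
  also have "\<dots> = (\<integral>\<^sup>+u. ennreal (p (fst u)) * h (u, True) + ennreal (1 - p (fst u)) * h (u, False) \<partial>Q)"
    by (intro nn_integral_cong, subst nn_integral_count_space_finite)
      (auto simp: UNIV_bool w_def case_prod_beta')
  finally show ?thesis .
qed

lemma prob_space_mar_obs: "prob_space Obs"
proof
  have "emeasure Obs (space Obs) = (\<integral>\<^sup>+u. ennreal (p (fst u)) + ennreal (1 - p (fst u)) \<partial>Q)"
    using nn_integral_mar_obs[of "\<lambda>_. 1"] by simp
  also have "\<dots> = (\<integral>\<^sup>+u. 1 \<partial>Q)"
    using p_range space_Q by (intro nn_integral_cong) (auto simp: ennreal_plus[symmetric] simp del: ennreal_plus)
  also have "\<dots> = 1" using prob_space.emeasure_space_1[OF Q_prob] by simp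
  finally show "emeasure Obs (space Obs) = 1" .
qed

interpretation Obs: prob_space Obs by (rule prob_space_mar_obs)

lemma bin_measurable: "(\<lambda>x. bin \<epsilon> ph x) \<in> measurable MX (count_space UNIV)"
proof -
  define h where "h x = log (1 + \<epsilon>) (ph x / (1 - ph x))" for x
  have [measurable]: "h \<in> borel_measurable MX" unfolding h_def using ph_measurable by measurable
  have "(\<lambda>x. \<lfloor>h x\<rfloor>) \<in> measurable MX (count_space UNIV)"
  proof (subst measurable_count_space_eq2_countable, safe)
    fix k :: int
    have "{x \<in> space MX. real_of_int \<lfloor>h x\<rfloor> = real_of_int k} \<in> sets MX" by measurable
    thus "(\<lambda>x. \<lfloor>h x\<rfloor>) -` {k} \<inter> space MX \<in> sets MX" by (simp add: vimage_def Int_def conj_commute)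
  qed auto
  moreover have "bin \<epsilon> ph x = \<lfloor>h x\<rfloor>" if "x \<in> space MX" for x
    using ph_range \<epsilon> that unfolding h_def by (intro bin_eq_floor) auto
  ultimately show ?thesis by (metis (mono_tags, lifting) measurable_cong)
qed

lemma bin_fst_measurable[measurable]: "(\<lambda>u. bin \<epsilon> ph (fst u)) \<in> measurable Q (count_space UNIV)"
  by (rule measurable_Q_fst[OF bin_measurable])

definition log_odds_sup :: real where
  "log_odds_sup = (SUP x\<in>space MX. \<bar>ln (odds_ratio p ph x)\<bar>)"

text \<open>In the notation of the statement, \<open>odds_factor = (1 + \<epsilon>) * (1 + \<delta>)\<close>.\<close>
definition odds_factor :: real where
  "odds_factor = (1 + \<epsilon>) * exp (2 * log_odds_sup)"

lemma log_odds_sup_nonneg: "0 \<le> log_odds_sup"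
proof -
  obtain x where "x \<in> space MX" using prob_space.not_empty[OF Q_prob] space_Q by auto
  hence "\<bar>ln (odds_ratio p ph x)\<bar> \<le> log_odds_sup"
    unfolding log_odds_sup_def by (rule cSUP_upper[OF _ log_odds_bdd])
  thus ?thesis by simp
qed

lemma odds_factor_ge_1: "1 \<le> odds_factor"
proof -
  have "1 * 1 \<le> (1 + \<epsilon>) * exp (2 * log_odds_sup)"
    using \<epsilon> log_odds_sup_nonneg by (intro mult_mono) auto
  thus ?thesis unfolding odds_factor_def by simp
qed

text \<open>Within a bin the estimated odds differ by a factor below \<open>1 + \<epsilon>\<close>, and the true odds are within
  \<open>exp log_odds_sup\<close> of the estimated ones on either side.\<close>
lemma odds_le_within_bin:
  assumes x: "x \<in> space MX" and x': "x' \<in> space MX" and same_bin: "bin \<epsilon> ph x = bin \<epsilon> ph x'"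
  shows "p x / (1 - p x) \<le> odds_factor * (p x' / (1 - p x'))"
proof -
  define q where "q = 1 + \<epsilon>"
  define u where "u y = ph y / (1 - ph y)" for y
  define po where "po y = p y / (1 - p y)" for y
  have q: "1 < q" unfolding q_def using \<epsilon> by simp
  have ph: "0 < ph x" "ph x < 1" "0 < ph x'" "ph x' < 1" using ph_range x x' by auto
  have u_pos: "0 < u x" "0 < u x'" unfolding u_def using ph by auto
  have po_pos: "0 < po x" "0 < po x'" unfolding po_def using p_range x x' by auto
  have u_bin: "u x < q * u x'"
  proof -
    have "u x < q powi (bin \<epsilon> ph x + 1)"
      using bin_odds_bounds(2)[of ph x, OF ph(1,2) \<epsilon>] unfolding u_def q_def .
    also have "\<dots> = q * q powi (bin \<epsilon> ph x')" using q same_bin by (simp add: power_int_add)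
    also have "\<dots> \<le> q * u x'"
      using mult_left_mono[OF bin_odds_bounds(1)[of ph x', OF ph(3,4) \<epsilon>], of q] q
      unfolding u_def q_def by simp
    finally show ?thesis .
  qed
  have log_bound: "\<bar>ln (po y / u y)\<bar> \<le> log_odds_sup" if "y \<in> space MX" for y
    using cSUP_upper[OF that log_odds_bdd]
    unfolding log_odds_sup_def odds_ratio_def po_def u_def by simp
  have "po x \<le> exp log_odds_sup * u x"
  proof -
    have "po x / u x \<le> exp log_odds_sup"
      using log_bound[OF x] po_pos u_pos by (metis abs_le_D1 divide_pos_pos exp_le_cancel_iff exp_ln)
    thus ?thesis using u_pos by (simp add: divide_le_eq mult.commute)
  qed
  also have "\<dots> \<le> exp log_odds_sup * (q * u x')" using u_bin by simp
  also have "\<dots> \<le> exp log_odds_sup * (q * (exp log_odds_sup * po x'))"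
  proof -
    have "exp (- log_odds_sup) \<le> po x' / u x'"
      using log_bound[OF x'] po_pos u_pos
      by (metis abs_le_D2 divide_pos_pos exp_le_cancel_iff exp_ln minus_le_iff)
    hence "u x' \<le> exp log_odds_sup * po x'"
      using u_pos by (simp add: le_divide_eq exp_minus field_simps)
    thus ?thesis using q by simp
  qed
  also have "\<dots> = odds_factor * po x'"
    unfolding odds_factor_def q_def mult_2 exp_add by (simp add: field_simps)
  finally show ?thesis unfolding po_def .
qed

lemma odds_cross_le:
  assumes u: "u \<in> space Q" and u': "u' \<in> space Q"
    and same_bin: "bin \<epsilon> ph (fst u) = bin \<epsilon> ph (fst u')"
  shows "p (fst u) * (1 - p (fst u')) \<le> odds_factor * (1 - p (fst u)) * p (fst u')"
proof -
  have x: "fst u \<in> space MX" "fst u' \<in> space MX" using u u' space_Q by auto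
  have p: "0 < p (fst u)" "p (fst u) < 1" "0 < p (fst u')" "p (fst u') < 1" using p_range x by auto
  show ?thesis
    using odds_le_within_bin[OF x same_bin] p by (simp add: field_simps)
qed

definition bin_score_set :: "int \<Rightarrow> real set \<Rightarrow> ('x \<times> 'y) set" where
  "bin_score_set k A = {u \<in> space Q. bin \<epsilon> ph (fst u) = k \<and> s (fst u) (snd u) \<in> A}"

definition obs_weight :: "bool \<Rightarrow> 'x \<times> 'y \<Rightarrow> real" where
  "obs_weight a0 u = (if a0 then p (fst u) else 1 - p (fst u))"

definition joint_mass :: "bool \<Rightarrow> int \<Rightarrow> real set \<Rightarrow> ennreal" where
  "joint_mass a0 k A = (\<integral>\<^sup>+u. ennreal (obs_weight a0 u) * indicator (bin_score_set k A) u \<partial>Q)"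

lemma bin_score_set_sets[measurable]: "A \<in> sets borel \<Longrightarrow> bin_score_set k A \<in> sets Q"
proof -
  assume A: "A \<in> sets borel"
  have "bin_score_set k A =
      {u \<in> space Q. bin \<epsilon> ph (fst u) = k} \<inter> ((\<lambda>u. s (fst u) (snd u)) -` A \<inter> space Q)"
    unfolding bin_score_set_def by auto
  also have "\<dots> \<in> sets Q" using measurable_sets[OF score_measurable A] by measurable
  finally show ?thesis .
qed

lemma obs_weight_measurable[measurable]: "(\<lambda>u. ennreal (obs_weight a0 u)) \<in> borel_measurable Q"
  unfolding obs_weight_def by measurable

lemma p_times_joint_mass_le:
  assumes u: "u \<in> bin_score_set k A"
  shows "ennreal (p (fst u)) * joint_mass False k UNIV
    \<le> ennreal (odds_factor * (1 - p (fst u))) * joint_mass True k UNIV"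
proof -
  have uQ: "u \<in> space Q" and u_bin: "bin \<epsilon> ph (fst u) = k" using u unfolding bin_score_set_def by auto
  have "ennreal (p (fst u)) * joint_mass False k UNIV
      = (\<integral>\<^sup>+u'. ennreal (p (fst u)) * (ennreal (obs_weight False u') * indicator (bin_score_set k UNIV) u') \<partial>Q)"
    unfolding joint_mass_def by (rule nn_integral_cmult[symmetric]) measurable
  also have "\<dots> \<le> (\<integral>\<^sup>+u'. ennreal (odds_factor * (1 - p (fst u))) *
      (ennreal (obs_weight True u') * indicator (bin_score_set k UNIV) u') \<partial>Q)"
  proof (rule nn_integral_mono)
    fix u' assume u': "u' \<in> space Q"
    have "ennreal (p (fst u)) * ennreal (1 - p (fst u')) \<le> ennreal (odds_factor * (1 - p (fst u))) * ennreal (p (fst u'))"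
      if "bin \<epsilon> ph (fst u') = k"
    proof -
      have "p (fst u) * (1 - p (fst u')) \<le> odds_factor * (1 - p (fst u)) * p (fst u')"
        using odds_cross_le[OF uQ u'] u_bin that by simp
      moreover have "0 \<le> p (fst u)" "0 \<le> 1 - p (fst u')" "0 \<le> odds_factor * (1 - p (fst u))" "0 \<le> p (fst u')"
        using p_range uQ u' space_Q odds_factor_ge_1 by auto
      ultimately show ?thesis by (simp add: ennreal_mult[symmetric] ennreal_leI)
    qed
    thus "ennreal (p (fst u)) * (ennreal (obs_weight False u') * indicator (bin_score_set k UNIV) u')
      \<le> ennreal (odds_factor * (1 - p (fst u))) * (ennreal (obs_weight True u') * indicator (bin_score_set k UNIV) u')"
      by (cases "u' \<in> bin_score_set k UNIV") (auto simp: bin_score_set_def obs_weight_def mult.assoc[symmetric])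
  qed
  also have "\<dots> = ennreal (odds_factor * (1 - p (fst u))) * joint_mass True k UNIV"
    unfolding joint_mass_def by (rule nn_integral_cmult) measurable
  finally show ?thesis .
qed

text \<open>Double integration of the cross-odds bound over two independent copies of the bin.\<close>
lemma joint_mass_cross_le:
  assumes A: "A \<in> sets borel"
  shows "joint_mass True k A * joint_mass False k UNIV
    \<le> ennreal odds_factor * joint_mass False k A * joint_mass True k UNIV"
proof -
  let ?B = "bin_score_set k A"
  have "joint_mass True k A * joint_mass False k UNIV
      = (\<integral>\<^sup>+u. ennreal (obs_weight True u) * indicator ?B u * joint_mass False k UNIV \<partial>Q)"
    unfolding joint_mass_def[of True] by (rule nn_integral_multc[symmetric]) (use A in measurable)
  also have "\<dots> \<le> (\<integral>\<^sup>+u. ennreal odds_factor * (ennreal (obs_weight False u) * indicator ?B u)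
      * joint_mass True k UNIV \<partial>Q)"
  proof (rule nn_integral_mono)
    fix u
    show "ennreal (obs_weight True u) * indicator ?B u * joint_mass False k UNIV
      \<le> ennreal odds_factor * (ennreal (obs_weight False u) * indicator ?B u) * joint_mass True k UNIV"
    proof (cases "u \<in> ?B")
      case True
      have "0 \<le> 1 - p (fst u)" using True p_range space_Q unfolding bin_score_set_def by auto
      hence "ennreal (odds_factor * (1 - p (fst u))) = ennreal odds_factor * ennreal (1 - p (fst u))"
        using odds_factor_ge_1 by (intro ennreal_mult) auto
      thus ?thesis
        using p_times_joint_mass_le[OF True] True by (simp add: obs_weight_def ac_simps)
    qed simp
  qed
  also have "\<dots> = ennreal odds_factor * joint_mass False k A * joint_mass True k UNIV"
    unfolding joint_mass_def[of False k A] using A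
    by (simp add: nn_integral_multc nn_integral_cmult)
  finally show ?thesis .
qed

definition obs_bin :: "('x \<times> 'y) \<times> bool \<Rightarrow> int" where
  "obs_bin z = bin \<epsilon> ph (fst (fst z))"

definition obs_score :: "('x \<times> 'y) \<times> bool \<Rightarrow> real" where
  "obs_score z = s (fst (fst z)) (snd (fst z))"

definition cell :: "int \<Rightarrow> bool \<Rightarrow> (('x \<times> 'y) \<times> bool) set" where
  "cell k a0 = {z \<in> space Obs. obs_bin z = k \<and> snd z = a0}"

definition cell_prob :: "int \<Rightarrow> bool \<Rightarrow> real" where
  "cell_prob k a0 = measure Obs (cell k a0)"

definition cell_cond :: "int \<Rightarrow> bool \<Rightarrow> (('x \<times> 'y) \<times> bool) measure" where
  "cell_cond k a0 = density Obs (\<lambda>z. ennreal (1 / cell_prob k a0) * indicator (cell k a0) z)"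

text \<open>For a null cell the conditional law of the other cell of the bin (or \<open>Obs\<close>) is used
  instead: this keeps every \<open>score_law\<close> a probability measure and makes \<open>score_law_dominated\<close>
  trivial in such bins.\<close>
definition cell_law :: "int \<Rightarrow> bool \<Rightarrow> (('x \<times> 'y) \<times> bool) measure" where
  "cell_law k a0 =
    (if 0 < cell_prob k True \<and> 0 < cell_prob k False then cell_cond k a0
     else if 0 < cell_prob k False then cell_cond k False
     else if 0 < cell_prob k True then cell_cond k True else Obs)"

definition score_law :: "bool \<Rightarrow> int \<Rightarrow> real measure" where
  "score_law a0 k = distr (cell_law k a0) borel obs_score"

lemma obs_bin_measurable[measurable]: "obs_bin \<in> measurable Obs (count_space UNIV)"
proof -
  have "(\<lambda>z. bin \<epsilon> ph (fst (fst z))) \<in> measurable (Q \<Otimes>\<^sub>M count_space UNIV) (count_space UNIV)"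
    by measurable
  thus ?thesis unfolding obs_bin_def by (subst measurable_cong_sets[OF sets_mar_obs refl])
qed

lemma snd_measurable_Obs[measurable]: "snd \<in> measurable Obs (count_space UNIV)"
  by (subst measurable_cong_sets[OF sets_mar_obs refl]) measurable

lemma obs_score_measurable[measurable]: "obs_score \<in> borel_measurable Obs"
proof -
  have "(\<lambda>z. s (fst (fst z)) (snd (fst z))) \<in> borel_measurable (Q \<Otimes>\<^sub>M count_space UNIV)"
    by measurable
  thus ?thesis unfolding obs_score_def by (subst measurable_cong_sets[OF sets_mar_obs refl])
qed

lemma cell_sets[measurable]: "cell k a0 \<in> sets Obs"
  unfolding cell_def by measurable

lemma cell_score_sets:
  assumes "A \<in> sets borel"
  shows "obs_score -` A \<inter> cell k a0 \<in> sets Obs"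
proof -
  have "obs_score -` A \<inter> cell k a0 = (obs_score -` A \<inter> space Obs) \<inter> cell k a0"
    unfolding cell_def by auto
  thus ?thesis using measurable_sets[OF obs_score_measurable assms] cell_sets by auto
qed

lemma emeasure_cell_score:
  assumes A: "A \<in> sets borel"
  shows "emeasure Obs (obs_score -` A \<inter> cell k a0) = joint_mass a0 k A"
proof -
  have E: "obs_score -` A \<inter> cell k a0 \<in> sets Obs" using A by (rule cell_score_sets)
  have "emeasure Obs (obs_score -` A \<inter> cell k a0) = (\<integral>\<^sup>+z. indicator (obs_score -` A \<inter> cell k a0) z \<partial>Obs)"
    using E by simp
  also have "\<dots> = joint_mass a0 k A"
    unfolding joint_mass_def using E
    by (subst nn_integral_mar_obs)
      (auto intro!: nn_integral_cong simp: measurable_cong_sets[OF sets_mar_obs refl, symmetric]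
        cell_def bin_score_set_def obs_weight_def obs_bin_def obs_score_def space_mar_obs indicator_def)
  finally show ?thesis .
qed

lemma cell_prob_nonneg: "0 \<le> cell_prob k a0"
  unfolding cell_prob_def by simp

lemma emeasure_cell: "emeasure Obs (cell k a0) = joint_mass a0 k UNIV"
  using emeasure_cell_score[of UNIV k a0] by simp

lemma prob_space_cell_cond:
  assumes "0 < cell_prob k a0"
  shows "prob_space (cell_cond k a0)"
proof
  have "emeasure (cell_cond k a0) (space (cell_cond k a0)) = ennreal (1 / cell_prob k a0) * emeasure Obs (cell k a0)"
    unfolding cell_cond_def by (subst emeasure_density) (auto intro!: nn_integral_cmult_indicator)
  also have "\<dots> = 1"
    using assms unfolding cell_prob_def by (simp add: Obs.emeasure_eq_measure ennreal_mult[symmetric])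
  finally show "emeasure (cell_cond k a0) (space (cell_cond k a0)) = 1" .
qed

lemma prob_space_cell_law: "prob_space (cell_law k a0)"
  unfolding cell_law_def using prob_space_cell_cond prob_space_mar_obs by (cases a0) auto

lemma sets_cell_cond: "sets (cell_cond k a0) = sets Obs"
  unfolding cell_cond_def by simp

lemma sets_cell_law: "sets (cell_law k a0) = sets Obs"
  unfolding cell_law_def cell_cond_def by auto

lemma prob_space_score_law: "prob_space (score_law a0 k)"
  unfolding score_law_def
  by (rule prob_space.prob_space_distr[OF prob_space_cell_law])
    (simp add: measurable_cong_sets[OF sets_cell_law refl])

lemma sets_score_law: "sets (score_law a0 k) = sets borel"
  unfolding score_law_def by simp

lemma emeasure_score_law:
  assumes A: "A \<in> sets borel" and pos: "0 < cell_prob k True" "0 < cell_prob k False"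
  shows "emeasure (score_law a0 k) A = ennreal (1 / cell_prob k a0) * joint_mass a0 k A"
proof -
  have E: "obs_score -` A \<inter> space Obs \<in> sets Obs" by (rule measurable_sets[OF obs_score_measurable A])
  have "cell_law k a0 = cell_cond k a0" using pos unfolding cell_law_def by simp
  moreover have "obs_score \<in> borel_measurable (cell_cond k a0)"
    by (subst measurable_cong_sets[OF sets_cell_cond refl]) (rule obs_score_measurable)
  moreover have "space (cell_cond k a0) = space Obs" by (simp add: cell_cond_def)
  ultimately have "emeasure (score_law a0 k) A = emeasure (cell_cond k a0) (obs_score -` A \<inter> space Obs)"
    unfolding score_law_def using A by (simp add: emeasure_distr)
  also have "\<dots> = (\<integral>\<^sup>+z. ennreal (1 / cell_prob k a0) * indicator (obs_score -` A \<inter> cell k a0) z \<partial>Obs)"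
    unfolding cell_cond_def using E
    by (subst emeasure_density) (auto intro!: nn_integral_cong simp: indicator_def cell_def)
  also have "\<dots> = ennreal (1 / cell_prob k a0) * joint_mass a0 k A"
    using cell_score_sets[OF A] emeasure_cell_score[OF A] by (simp add: nn_integral_cmult_indicator)
  finally show ?thesis .
qed

lemma score_law_dominated:
  assumes A: "A \<in> sets borel"
  shows "ennreal (1 / odds_factor) * emeasure (score_law True k) A \<le> emeasure (score_law False k) A"
proof (cases "0 < cell_prob k True \<and> 0 < cell_prob k False")
  case False
  hence "score_law True k = score_law False k" unfolding score_law_def cell_law_def by auto
  moreover have "ennreal (1 / odds_factor) \<le> 1" using odds_factor_ge_1 by simp
  ultimately show ?thesis using mult_right_mono[of "ennreal (1 / odds_factor)" 1] by simp
next
  case True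
  define mT mF aT aF where "mT = cell_prob k True" and "mF = cell_prob k False"
    and "aT = measure Obs (obs_score -` A \<inter> cell k True)" and "aF = measure Obs (obs_score -` A \<inter> cell k False)"
  have pos: "0 < mT" "0 < mF" using True unfolding mT_def mF_def by auto
  have R: "1 \<le> odds_factor" by (rule odds_factor_ge_1)
  have joint: "joint_mass True k A = ennreal aT" "joint_mass False k A = ennreal aF"
    "joint_mass True k UNIV = ennreal mT" "joint_mass False k UNIV = ennreal mF"
    unfolding aT_def aF_def mT_def mF_def cell_prob_def
    using emeasure_cell_score[OF A] emeasure_cell by (simp_all add: Obs.emeasure_eq_measure)
  have nonneg: "0 \<le> aT" "0 \<le> aF" unfolding aT_def aF_def by auto
  have "ennreal (aT * mF) \<le> ennreal (odds_factor * aF * mT)"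
    using joint_mass_cross_le[OF A, of k] nonneg pos R by (simp add: joint ennreal_mult[symmetric])
  hence cross: "aT * mF \<le> odds_factor * aF * mT" using nonneg pos R by (subst (asm) ennreal_le_iff) auto
  have "(1 / odds_factor) * ((1 / mT) * aT) = (aT * mF) / (odds_factor * mT * mF)"
    using pos R by (simp add: field_simps)
  also have "\<dots> \<le> (odds_factor * aF * mT) / (odds_factor * mT * mF)"
    using cross pos R by (intro divide_right_mono) auto
  also have "\<dots> = (1 / mF) * aF" using pos R by (simp add: field_simps)
  finally have "ennreal ((1 / odds_factor) * ((1 / mT) * aT)) \<le> ennreal ((1 / mF) * aF)"
    by (rule ennreal_leI)
  moreover have "emeasure (score_law True k) A = ennreal (1 / mT) * ennreal aT"
    using emeasure_score_law[OF A] True by (simp add: joint mT_def)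
  moreover have "emeasure (score_law False k) A = ennreal (1 / mF) * ennreal aF"
    using emeasure_score_law[OF A] True by (simp add: joint mF_def)
  ultimately show ?thesis using pos R nonneg by (simp add: ennreal_mult[symmetric] mult.assoc)
qed

subsection \<open>Atoms of the conditioning \<sigma>-algebra\<close>

lemma prob_space_mar_data: "prob_space (mar_data n Q p)"
  unfolding mar_data_def by (intro prob_space_PiM prob_space_mar_obs)

definition atom :: "nat \<Rightarrow> (nat \<Rightarrow> int) \<Rightarrow> (nat \<Rightarrow> bool) \<Rightarrow> (nat \<Rightarrow> ('x \<times> 'y) \<times> bool) set" where
  "atom n b a = {\<omega> \<in> space (mar_data n Q p). \<forall>i<n. obs_bin (\<omega> i) = b i \<and> snd (\<omega> i) = a i}"

lemma atom_eq_PiE: "atom n b a = PiE {..<n} (\<lambda>i. cell (b i) (a i))"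
  unfolding atom_def mar_data_def space_PiM cell_def by (auto simp: PiE_def Pi_def)

lemma atom_sets: "atom n b a \<in> sets (mar_data n Q p)"
  unfolding atom_eq_PiE mar_data_def by (rule sets_PiM_I_finite) auto

lemma emeasure_atom:
  "emeasure (mar_data n Q p) (atom n b a) = ennreal (\<Prod>i<n. cell_prob (b i) (a i))"
proof -
  interpret product_sigma_finite "\<lambda>_. Obs"
    unfolding product_sigma_finite_def by (simp add: prob_space_imp_sigma_finite prob_space_mar_obs)
  have "emeasure (mar_data n Q p) (atom n b a) = (\<Prod>i<n. emeasure Obs (cell (b i) (a i)))"
    unfolding atom_eq_PiE mar_data_def by (rule emeasure_PiM) auto
  also have "\<dots> = ennreal (\<Prod>i<n. cell_prob (b i) (a i))"
    by (simp add: cell_prob_def Obs.emeasure_eq_measure prod_ennreal)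
  finally show ?thesis .
qed

lemma pro_coverage_eq_on_atom:
  assumes "\<omega> \<in> atom n b a"
  shows "pro_coverage \<alpha> \<epsilon> ph s n \<omega> = score_coverage (1 - \<alpha>) n b a (compose {..<n} obs_score \<omega>)"
  unfolding pro_coverage_eq_score_coverage[OF \<alpha>(2)] using assms
  by (intro score_coverage_cong)
    (auto simp: atom_def obs_bin_def obsX_def obsA_def obsY_def obs_score_def compose_def)

lemma measurable_compose_obs_score:
  assumes "\<And>i. sets (N i) = sets Obs" and "\<And>i. sets (M i) = sets borel"
  shows "compose {..<n} obs_score \<in> measurable (PiM {..<n} N) (PiM {..<n} M)"
  unfolding compose_def
proof (intro measurable_restrict)
  fix i assume "i \<in> {..<n}"
  hence "(\<lambda>\<omega>. \<omega> i) \<in> measurable (PiM {..<n} N) (N i)"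
    by (rule measurable_component_singleton)
  hence "(\<lambda>\<omega>. \<omega> i) \<in> measurable (PiM {..<n} N) Obs"
    by (subst (asm) measurable_cong_sets[OF refl assms(1)])
  thus "(\<lambda>\<omega>. obs_score (\<omega> i)) \<in> measurable (PiM {..<n} N) (M i)"
    by (subst measurable_cong_sets[OF refl assms(2)]) (rule measurable_compose[OF _ obs_score_measurable])
qed

text \<open>Conditionally on an atom the observations are independent, each with the law of its cell.\<close>
lemma nn_integral_atom:
  assumes pos: "\<And>i. i < n \<Longrightarrow> 0 < cell_prob (b i) (a i)"
    and F: "F \<in> borel_measurable (mar_data n Q p)"
  shows "(\<integral>\<^sup>+\<omega>. F \<omega> * indicator (atom n b a) \<omega> \<partial>mar_data n Q p)
    = ennreal (\<Prod>i<n. cell_prob (b i) (a i)) * (\<integral>\<^sup>+\<omega>. F \<omega> \<partial>PiM {..<n} (\<lambda>i. cell_law (b i) (a i)))"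
proof -
  define m where "m i = cell_prob (b i) (a i)" for i
  define f where "f i = (if i < n then (\<lambda>z. ennreal (1 / m i) * indicator (cell (b i) (a i)) z) else (\<lambda>_. 1))"
    for i
  have f: "f i \<in> borel_measurable Obs" for i unfolding f_def by (cases "i < n") auto
  have density_f: "density Obs (f i) = cell_law (b i) (a i)" if "i < n" for i
    using pos[OF that] that unfolding f_def m_def cell_law_def cell_cond_def by (cases "a i") auto
  have prob_f: "prob_space (density Obs (f i))" for i
  proof (cases "i < n")
    case True thus ?thesis using density_f prob_space_cell_law by simp
  next
    case False thus ?thesis unfolding f_def using prob_space_mar_obs by (simp add: density_1)
  qed
  have "PiM {..<n} (\<lambda>i. cell_law (b i) (a i)) = PiM {..<n} (\<lambda>i. density Obs (f i))"
    using density_f by (intro PiM_cong) auto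
  also have "\<dots> = density (mar_data n Q p) (\<lambda>\<omega>. \<Prod>i<n. f i (\<omega> i))"
    unfolding mar_data_def by (rule PiM_density_eq_density_prod[OF _ prob_space_mar_obs f prob_f]) simp
  finally have law: "PiM {..<n} (\<lambda>i. cell_law (b i) (a i)) = density (mar_data n Q p) (\<lambda>\<omega>. \<Prod>i<n. f i (\<omega> i))" .
  have prod_f_measurable: "(\<lambda>\<omega>. \<Prod>i<n. f i (\<omega> i)) \<in> borel_measurable (mar_data n Q p)"
  proof (intro borel_measurable_prod_ennreal)
    fix i assume "i \<in> {..<n}"
    thus "(\<lambda>\<omega>. f i (\<omega> i)) \<in> borel_measurable (mar_data n Q p)"
      unfolding mar_data_def
      using measurable_comp[OF measurable_component_singleton[of i "{..<n}" "\<lambda>_. Obs"] f[of i]]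
      by (simp add: comp_def)
  qed
  have normalized: "ennreal (\<Prod>i<n. m i) * (\<Prod>i<n. f i (\<omega> i)) = indicator (atom n b a) \<omega>"
    if "\<omega> \<in> space (mar_data n Q p)" for \<omega>
  proof -
    have "\<omega> \<in> extensional {..<n}" using that by (simp add: mar_data_def space_PiM PiE_def)
    hence "(\<Prod>i<n. f i (\<omega> i)) = ennreal (\<Prod>i<n. 1 / m i) * indicator (atom n b a) \<omega>"
      unfolding atom_eq_PiE f_def
      by (simp add: prod.distrib prod_ennreal m_def indicator_PiE_eq_prod cell_prob_nonneg)
    moreover have "(\<Prod>i<n. m i) * (\<Prod>i<n. 1 / m i) = 1"
      using pos unfolding prod.distrib[symmetric] m_def by (intro prod.neutral) (simp add: less_le)
    ultimately show ?thesis
      by (simp add: m_def ennreal_mult'[symmetric] mult.assoc[symmetric] prod_nonneg cell_prob_nonneg)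
  qed
  have "ennreal (\<Prod>i<n. m i) * (\<integral>\<^sup>+\<omega>. F \<omega> \<partial>PiM {..<n} (\<lambda>i. cell_law (b i) (a i)))
      = ennreal (\<Prod>i<n. m i) * (\<integral>\<^sup>+\<omega>. (\<Prod>i<n. f i (\<omega> i)) * F \<omega> \<partial>mar_data n Q p)"
    unfolding law by (simp add: nn_integral_density[OF prod_f_measurable F])
  also have "\<dots> = (\<integral>\<^sup>+\<omega>. ennreal (\<Prod>i<n. m i) * (\<Prod>i<n. f i (\<omega> i)) * F \<omega> \<partial>mar_data n Q p)"
    using prod_f_measurable F by (simp add: nn_integral_cmult mult.assoc)
  also have "\<dots> = (\<integral>\<^sup>+\<omega>. F \<omega> * indicator (atom n b a) \<omega> \<partial>mar_data n Q p)"
    by (intro nn_integral_cong) (simp add: normalized mult.commute)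
  finally show ?thesis unfolding m_def by simp
qed

lemma distr_PiM_cell_law_scores:
  fixes n :: nat
  shows "distr (PiM {..<n} (\<lambda>i. cell_law (b i) (a i))) (PiM {..<n} (\<lambda>i. score_law (a i) (b i)))
      (compose {..<n} obs_score)
    = PiM {..<n} (\<lambda>i. score_law (a i) (b i))"
proof -
  have "distr (PiM {..<n} (\<lambda>i. cell_law (b i) (a i))) (PiM {..<n} (\<lambda>i. score_law (a i) (b i)))
      (compose {..<n} obs_score)
    = PiM {..<n} (\<lambda>i. distr (cell_law (b i) (a i)) (score_law (a i) (b i)) obs_score)"
  proof (rule distr_PiM_finite_prob_space')
    fix i
    show "obs_score \<in> measurable (cell_law (b i) (a i)) (score_law (a i) (b i))"
      using obs_score_measurable
      by (simp add: measurable_cong_sets[OF sets_cell_law sets_score_law])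
  qed (auto simp: prob_space_cell_law prob_space_score_law)
  also have "\<dots> = PiM {..<n} (\<lambda>i. score_law (a i) (b i))"
  proof (intro PiM_cong refl)
    fix i
    have "distr (cell_law (b i) (a i)) (score_law (a i) (b i)) obs_score = distr (cell_law (b i) (a i)) borel obs_score"
      by (rule distr_cong) (simp_all add: sets_score_law)
    thus "distr (cell_law (b i) (a i)) (score_law (a i) (b i)) obs_score = score_law (a i) (b i)"
      unfolding score_law_def by simp
  qed
  finally show ?thesis .
qed

lemma nn_integral_pro_coverage_atom:
  assumes pos: "\<And>i. i < n \<Longrightarrow> 0 < cell_prob (b i) (a i)"
  shows "(\<integral>\<^sup>+\<omega>. ennreal (pro_coverage \<alpha> \<epsilon> ph s n \<omega>) * indicator (atom n b a) \<omega> \<partial>mar_data n Q p)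
    = ennreal (\<Prod>i<n. cell_prob (b i) (a i)) *
      ennreal (\<integral>S. score_coverage (1 - \<alpha>) n b a S \<partial>PiM {..<n} (\<lambda>i. score_law (a i) (b i)))"
proof -
  let ?\<rho> = "\<lambda>i. score_law (a i) (b i)" and ?cells = "\<lambda>i. cell_law (b i) (a i)"
  let ?cov = "\<lambda>S. ennreal (score_coverage (1 - \<alpha>) n b a S)"
  interpret P: prob_space "PiM {..<n} ?\<rho>" by (intro prob_space_PiM prob_space_score_law)
  have cov_measurable: "score_coverage (1 - \<alpha>) n b a \<in> borel_measurable (PiM {..<n} ?\<rho>)"
    by (intro borel_measurable_score_coverage sets_score_law)
  have scores: "compose {..<n} obs_score \<in> measurable (PiM {..<n} N) (PiM {..<n} ?\<rho>)"
    if "\<And>i. sets (N i) = sets Obs" for N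
    using that by (intro measurable_compose_obs_score sets_score_law)
  have cov_obs[measurable]: "(\<lambda>\<omega>. score_coverage (1 - \<alpha>) n b a (compose {..<n} obs_score \<omega>))
      \<in> borel_measurable (mar_data n Q p)"
    unfolding mar_data_def using scores[of "\<lambda>_. Obs"] cov_measurable by (auto intro: measurable_compose)
  have "(\<integral>\<^sup>+\<omega>. ennreal (pro_coverage \<alpha> \<epsilon> ph s n \<omega>) * indicator (atom n b a) \<omega> \<partial>mar_data n Q p)
      = (\<integral>\<^sup>+\<omega>. ?cov (compose {..<n} obs_score \<omega>) * indicator (atom n b a) \<omega> \<partial>mar_data n Q p)"
    by (intro nn_integral_cong) (simp add: indicator_def pro_coverage_eq_on_atom)
  also have "\<dots> = ennreal (\<Prod>i<n. cell_prob (b i) (a i)) *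
      (\<integral>\<^sup>+\<omega>. ?cov (compose {..<n} obs_score \<omega>) \<partial>PiM {..<n} ?cells)"
    using cov_obs by (intro nn_integral_atom pos) measurable
  also have "(\<integral>\<^sup>+\<omega>. ?cov (compose {..<n} obs_score \<omega>) \<partial>PiM {..<n} ?cells) = (\<integral>\<^sup>+S. ?cov S \<partial>PiM {..<n} ?\<rho>)"
    using scores[of ?cells] cov_measurable sets_cell_law
    by (subst distr_PiM_cell_law_scores[symmetric], subst nn_integral_distr) auto
  also have "\<dots> = ennreal (\<integral>S. score_coverage (1 - \<alpha>) n b a S \<partial>PiM {..<n} ?\<rho>)"
    using cov_measurable score_coverage_bounds
    by (intro nn_integral_eq_integral P.integrable_const_bound[where B=1]) auto
  finally show ?thesis .
qed

lemma atom_coverage_bound: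
  "ennreal ((1 - \<alpha>) / odds_factor) * emeasure (mar_data n Q p) (atom n b a)
    \<le> (\<integral>\<^sup>+\<omega>. ennreal (pro_coverage \<alpha> \<epsilon> ph s n \<omega>) * indicator (atom n b a) \<omega> \<partial>mar_data n Q p)"
proof -
  let ?\<Omega> = "mar_data n Q p" and ?A = "atom n b a"
  have c: "0 \<le> (1 - \<alpha>) / odds_factor" "(1 - \<alpha>) / odds_factor \<le> 1"
    using \<alpha> odds_factor_ge_1 by (simp_all add: field_simps)
  consider "N0 n a = 0" | "\<exists>i<n. cell_prob (b i) (a i) = 0"
    | "N0 n a > 0" "\<And>i. i < n \<Longrightarrow> 0 < cell_prob (b i) (a i)"
    using cell_prob_nonneg by (metis less_le neq0_conv)
  then show ?thesis
  proof cases
    case 1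
    have "(\<integral>\<^sup>+\<omega>. ennreal (pro_coverage \<alpha> \<epsilon> ph s n \<omega>) * indicator ?A \<omega> \<partial>?\<Omega>) = (\<integral>\<^sup>+\<omega>. indicator ?A \<omega> \<partial>?\<Omega>)"
      using 1 by (intro nn_integral_cong) (simp add: indicator_def pro_coverage_eq_on_atom score_coverage_def)
    also have "\<dots> = emeasure ?\<Omega> ?A" using atom_sets by simp
    finally have "(\<integral>\<^sup>+\<omega>. ennreal (pro_coverage \<alpha> \<epsilon> ph s n \<omega>) * indicator ?A \<omega> \<partial>?\<Omega>) = emeasure ?\<Omega> ?A" .
    thus ?thesis using c mult_right_mono[of "ennreal ((1 - \<alpha>) / odds_factor)" 1] by simp
  next
    case 2
    hence "(\<Prod>i<n. cell_prob (b i) (a i)) = 0" by (intro prod_zero) auto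
    hence "emeasure ?\<Omega> ?A = 0" unfolding emeasure_atom by (simp only: ennreal_0)
    thus ?thesis by simp
  next
    case 3
    have "(1 - \<alpha>) / odds_factor \<le>
        (\<integral>S. score_coverage (1 - \<alpha>) n b a S \<partial>PiM {..<n} (\<lambda>i. score_law (a i) (b i)))"
    proof -
      have "(\<lambda>i. if a i then score_law True (b i) else score_law False (b i)) = (\<lambda>i. score_law (a i) (b i))"
        by (simp add: fun_eq_iff)
      thus ?thesis
        using score_coverage_integral_ge[of "score_law True" "score_law False" "1 / odds_factor" "1 - \<alpha>" n a b]
          prob_space_score_law sets_score_law score_law_dominated odds_factor_ge_1 \<alpha> 3(1)
        by simp
    qed
    hence "ennreal ((1 - \<alpha>) / odds_factor) * emeasure ?\<Omega> ?A
        \<le> ennreal (\<Prod>i<n. cell_prob (b i) (a i)) *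
          ennreal (\<integral>S. score_coverage (1 - \<alpha>) n b a S \<partial>PiM {..<n} (\<lambda>i. score_law (a i) (b i)))"
      unfolding emeasure_atom by (subst mult.commute) (intro mult_left_mono ennreal_leI; simp)
    also have "\<dots> = (\<integral>\<^sup>+\<omega>. ennreal (pro_coverage \<alpha> \<epsilon> ph s n \<omega>) * indicator ?A \<omega> \<partial>?\<Omega>)"
      by (rule nn_integral_pro_coverage_atom[OF 3(2), symmetric])
    finally show ?thesis .
  qed
qed

definition labels :: "nat \<Rightarrow> (nat \<Rightarrow> ('x \<times> 'y) \<times> bool) \<Rightarrow> nat \<Rightarrow> int \<times> bool" where
  "labels n \<omega> = restrict (\<lambda>i. (bin \<epsilon> ph (obsX \<omega> i), obsA \<omega> i)) {..<n}"

definition label_space :: "nat \<Rightarrow> (nat \<Rightarrow> int \<times> bool) set" where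
  "label_space n = PiE {..<n} (\<lambda>_. UNIV)"

abbreviation label_atom :: "nat \<Rightarrow> (nat \<Rightarrow> int \<times> bool) \<Rightarrow> (nat \<Rightarrow> ('x \<times> 'y) \<times> bool) set" where
  "label_atom n v \<equiv> atom n (\<lambda>i. fst (v i)) (\<lambda>i. snd (v i))"

lemma countable_label_space: "countable (label_space n)"
  unfolding label_space_def by (rule countable_PiE) simp_all

lemma labels_in_label_space: "labels n \<omega> \<in> label_space n"
  unfolding labels_def label_space_def by auto

lemma labels_preimage:
  "v \<in> label_space n \<Longrightarrow> labels n -` {v} \<inter> space (mar_data n Q p) = label_atom n v"
  unfolding labels_def atom_def label_space_def
  by (auto simp: obs_bin_def obsX_def obsA_def fun_eq_iff restrict_def PiE_def extensional_def
      split: if_splits)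

lemma labels_measurable: "labels n \<in> measurable (mar_data n Q p) (count_space (label_space n))"
  by (subst measurable_count_space_eq_countable[OF countable_label_space])
    (auto simp: labels_in_label_space labels_preimage atom_sets)

lemma BA_algebra_eq:
  "BA_algebra \<epsilon> ph n (mar_data n Q p) = vimage_algebra (space (mar_data n Q p)) (labels n) (count_space UNIV)"
  unfolding BA_algebra_def labels_def ..

lemma sets_BA_algebra_eq_UN_atoms:
  assumes "A \<in> sets (BA_algebra \<epsilon> ph n (mar_data n Q p))"
  obtains B where "B \<subseteq> label_space n" "A = (\<Union>v\<in>B. label_atom n v)"
proof -
  obtain C where C: "A = labels n -` C \<inter> space (mar_data n Q p)"
    using assms unfolding BA_algebra_eq by (subst (asm) sets_vimage_algebra2) auto
  have "A = (\<Union>v\<in>C \<inter> label_space n. label_atom n v)"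
  proof (intro set_eqI iffI)
    fix \<omega> assume "\<omega> \<in> A"
    hence "\<omega> \<in> labels n -` {labels n \<omega>} \<inter> space (mar_data n Q p)" "labels n \<omega> \<in> C \<inter> label_space n"
      using C labels_in_label_space by auto
    thus "\<omega> \<in> (\<Union>v\<in>C \<inter> label_space n. label_atom n v)"
      using labels_preimage[OF labels_in_label_space] by auto
  next
    fix \<omega> assume "\<omega> \<in> (\<Union>v\<in>C \<inter> label_space n. label_atom n v)"
    then obtain v where "v \<in> C \<inter> label_space n" "\<omega> \<in> label_atom n v" by auto
    thus "\<omega> \<in> A" using labels_preimage[of v n] C by auto
  qed
  thus ?thesis by (intro that[of "C \<inter> label_space n"]) auto
qed

lemma subalgebra_BA_algebra: "subalgebra (mar_data n Q p) (BA_algebra \<epsilon> ph n (mar_data n Q p))"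
proof -
  have "A \<in> sets (mar_data n Q p)" if A: "A \<in> sets (BA_algebra \<epsilon> ph n (mar_data n Q p))" for A
  proof -
    obtain B where "B \<subseteq> label_space n" "A = (\<Union>v\<in>B. label_atom n v)"
      using A by (rule sets_BA_algebra_eq_UN_atoms)
    thus ?thesis using countable_subset[OF _ countable_label_space]
      by (auto intro!: sets.countable_UN' atom_sets)
  qed
  thus ?thesis unfolding subalgebra_def BA_algebra_eq by auto
qed

lemma disjoint_family_on_label_atoms: "disjoint_family_on (label_atom n) (label_space n)"
  unfolding disjoint_family_on_def
proof (intro ballI impI)
  fix v w assume "v \<in> label_space n" "w \<in> label_space n" "v \<noteq> w"
  thus "label_atom n v \<inter> label_atom n w = {}"
    using labels_preimage[of v n] labels_preimage[of w n] by auto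
qed

lemma pro_coverage_measurable: "pro_coverage \<alpha> \<epsilon> ph s n \<in> borel_measurable (mar_data n Q p)"
proof -
  let ?\<Omega> = "mar_data n Q p"
  let ?cov = "\<lambda>v \<omega>. score_coverage (1 - \<alpha>) n (\<lambda>i. fst (v i)) (\<lambda>i. snd (v i)) (compose {..<n} obs_score \<omega>)"
  have scores: "compose {..<n} obs_score \<in> measurable ?\<Omega> (PiM {..<n} (\<lambda>_. borel))"
    unfolding mar_data_def by (intro measurable_compose_obs_score) simp_all
  have each: "?cov v \<in> borel_measurable ?\<Omega>" for v
    using measurable_compose[OF scores borel_measurable_score_coverage] by simp
  have "(\<lambda>\<omega>. ?cov (labels n \<omega>) \<omega>) \<in> borel_measurable ?\<Omega>"
    by (rule measurable_compose_countable'[OF each labels_measurable countable_label_space])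
  moreover have "pro_coverage \<alpha> \<epsilon> ph s n = (\<lambda>\<omega>. ?cov (labels n \<omega>) \<omega>)"
  proof
    fix \<omega>
    show "pro_coverage \<alpha> \<epsilon> ph s n \<omega> = ?cov (labels n \<omega>) \<omega>"
      unfolding pro_coverage_eq_score_coverage[OF \<alpha>(2)]
      by (intro score_coverage_cong) (auto simp: labels_def obs_score_def obsX_def obsY_def compose_def)
  qed
  ultimately show ?thesis by simp
qed

lemma integrable_pro_coverage: "integrable (mar_data n Q p) (pro_coverage \<alpha> \<epsilon> ph s n)"
proof -
  interpret prob_space "mar_data n Q p" by (rule prob_space_mar_data)
  show ?thesis
    using pro_coverage_measurable score_coverage_bounds
    by (intro integrable_const_bound[where B=1]) (auto simp: pro_coverage_eq_score_coverage[OF \<alpha>(2)])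
qed

lemma set_integral_pro_coverage_ge:
  assumes A: "A \<in> sets (BA_algebra \<epsilon> ph n (mar_data n Q p))"
  shows "(1 - \<alpha>) / odds_factor * measure (mar_data n Q p) A
    \<le> (\<integral>\<omega>\<in>A. pro_coverage \<alpha> \<epsilon> ph s n \<omega> \<partial>mar_data n Q p)"
proof -
  let ?\<Omega> = "mar_data n Q p" and ?f = "pro_coverage \<alpha> \<epsilon> ph s n" and ?c = "(1 - \<alpha>) / odds_factor"
  interpret \<Omega>: prob_space ?\<Omega> by (rule prob_space_mar_data)
  obtain B where B: "B \<subseteq> label_space n" and A_UN: "A = (\<Union>v\<in>B. label_atom n v)"
    using A by (rule sets_BA_algebra_eq_UN_atoms)
  have countable: "countable B" using B countable_label_space by (rule countable_subset)
  have disjoint: "disjoint_family_on (label_atom n) B"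
    using disjoint_family_on_label_atoms B by (rule disjoint_family_on_mono[rotated])
  have A_sets: "A \<in> sets ?\<Omega>" using A subalgebra_BA_algebra unfolding subalgebra_def by auto
  have f: "0 \<le> ?f \<omega>" "?f \<omega> \<le> 1" for \<omega>
    unfolding pro_coverage_eq_score_coverage[OF \<alpha>(2)] by (rule score_coverage_bounds)+
  have f_measurable: "(\<lambda>\<omega>. ennreal (?f \<omega>)) \<in> borel_measurable ?\<Omega>"
    using pro_coverage_measurable by measurable
  have c: "0 \<le> ?c" using \<alpha> odds_factor_ge_1 by simp
  have "ennreal ?c * emeasure ?\<Omega> A = ennreal ?c * (\<integral>\<^sup>+v. emeasure ?\<Omega> (label_atom n v) \<partial>count_space B)"
    unfolding A_UN by (subst emeasure_UN_countable[OF atom_sets countable disjoint]) simp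
  also have "\<dots> = (\<integral>\<^sup>+v. ennreal ?c * emeasure ?\<Omega> (label_atom n v) \<partial>count_space B)"
    by (rule nn_integral_cmult[symmetric]) simp
  also have "\<dots> \<le> (\<integral>\<^sup>+v. (\<integral>\<^sup>+\<omega>. ennreal (?f \<omega>) * indicator (label_atom n v) \<omega> \<partial>?\<Omega>) \<partial>count_space B)"
    by (intro nn_integral_mono atom_coverage_bound)
  also have "\<dots> = (\<integral>\<^sup>+v. emeasure (density ?\<Omega> (\<lambda>\<omega>. ennreal (?f \<omega>))) (label_atom n v) \<partial>count_space B)"
    by (intro nn_integral_cong) (simp add: emeasure_density[OF f_measurable atom_sets])
  also have "\<dots> = emeasure (density ?\<Omega> (\<lambda>\<omega>. ennreal (?f \<omega>))) A"
    unfolding A_UN by (rule emeasure_UN_countable[symmetric]) (use atom_sets countable disjoint in auto)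
  also have "\<dots> = (\<integral>\<^sup>+\<omega>. ennreal (indicator A \<omega> * ?f \<omega>) \<partial>?\<Omega>)"
    by (subst emeasure_density[OF f_measurable A_sets]) (auto intro!: nn_integral_cong simp: indicator_def)
  also have "\<dots> = ennreal (\<integral>\<omega>\<in>A. ?f \<omega> \<partial>?\<Omega>)"
    using integrable_real_mult_indicator[OF A_sets integrable_pro_coverage] f
    unfolding set_lebesgue_integral_def real_scaleR_def
    by (intro nn_integral_eq_integral) (auto simp: mult.commute)
  finally have "ennreal ?c * ennreal (measure ?\<Omega> A) \<le> ennreal (\<integral>\<omega>\<in>A. ?f \<omega> \<partial>?\<Omega>)"
    by (simp add: \<Omega>.emeasure_eq_measure)
  hence "ennreal (?c * measure ?\<Omega> A) \<le> ennreal (\<integral>\<omega>\<in>A. ?f \<omega> \<partial>?\<Omega>)"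
    by (simp only: ennreal_mult[OF c measure_nonneg])
  moreover have "0 \<le> (\<integral>\<omega>\<in>A. ?f \<omega> \<partial>?\<Omega>)"
    using f by (simp add: set_lebesgue_integral_def)
  ultimately show ?thesis by (simp add: ennreal_le_iff)
qed

end

theorem theorem3:
  fixes MX :: "'x measure" and MY :: "'y measure" and Q :: "('x \<times> 'y) measure"
    and p ph :: "'x \<Rightarrow> real" and s :: "'x \<Rightarrow> 'y \<Rightarrow> real"
    and \<alpha> \<epsilon> :: real and n :: nat
  assumes "prob_space Q"
    and "sets Q = sets (MX \<Otimes>\<^sub>M MY)"
    and "p \<in> borel_measurable MX"
    and "ph \<in> borel_measurable MX"
    and "(\<lambda>(x, y). s x y) \<in> borel_measurable (MX \<Otimes>\<^sub>M MY)"
    and "\<forall>x\<in>space MX. 0 < p x \<and> p x < 1"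
    and "\<forall>x\<in>space MX. 0 < ph x \<and> ph x < 1"
    and "0 < \<alpha>" and "\<alpha> < 1" and "0 < \<epsilon>"
    and "bdd_above ((\<lambda>x. \<bar>ln (odds_ratio p ph x)\<bar>) ` space MX)"
  shows "let \<Omega> = mar_data n Q p;
             \<delta> = exp (2 * (SUP x\<in>space MX. \<bar>ln (odds_ratio p ph x)\<bar>)) - 1
         in AE \<omega> in \<Omega>.
              real_cond_exp \<Omega> (BA_algebra \<epsilon> ph n \<Omega>) (pro_coverage \<alpha> \<epsilon> ph s n) \<omega>
                \<ge> 1 - \<alpha> - (\<epsilon> + \<delta> + \<epsilon> * \<delta>)"
proof -
  interpret mar_setting MX MY Q p ph s \<alpha> \<epsilon> using assms by (rule mar_setting.intro)
  define \<delta> where "\<delta> = exp (2 * (SUP x\<in>space MX. \<bar>ln (odds_ratio p ph x)\<bar>)) - 1"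
  have odds_factor_eq: "odds_factor = (1 + \<epsilon>) * (1 + \<delta>)"
    unfolding odds_factor_def \<delta>_def log_odds_sup_def by simp
  have bound: "AE \<omega> in mar_data n Q p. (1 - \<alpha>) / odds_factor
      \<le> real_cond_exp (mar_data n Q p) (BA_algebra \<epsilon> ph n (mar_data n Q p)) (pro_coverage \<alpha> \<epsilon> ph s n) \<omega>"
    by (rule AE_const_le_real_cond_exp[OF prob_space_mar_data subalgebra_BA_algebra
          integrable_pro_coverage set_integral_pro_coverage_ge])
  have slack: "1 - \<alpha> - (\<epsilon> + \<delta> + \<epsilon> * \<delta>) \<le> (1 - \<alpha>) / odds_factor"
    unfolding odds_factor_eq using \<alpha> \<epsilon> log_odds_sup_nonneg
    by (intro slack_le_div_odds) (auto simp: \<delta>_def log_odds_sup_def)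
  show ?thesis unfolding Let_def \<delta>_def[symmetric] using bound by eventually_elim (use slack in simp)
qed

end
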